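(* Let $L\ge2$ be an even integer, $A>0$, and let $\varphi$ be the principal eigenfunction of $-\Delta\varphi+Av\cdot\nabla\varphi=\lambda\varphi$ in $D$, $\varphi=0$ on $\partial D$, $\varphi>0$ in $D$. Let $Q_i$ be any cell. For any $\delta_0\in(0,\frac{1}{2\pi})$ there exists a level set $\Gamma_i\subset Q_i$ of $H$ with $|H(\Gamma_i)|\in(\delta_0,2\delta_0)$ such that $$\sup_{x_1,x_2\in\Gamma_i}|\varphi(x_1)-\varphi(x_2)|^2\le C\frac{1}{\delta_0}\log\Bigl(\frac1{\delta_0}\Bigr)\int_{Q_i}|v\cdot\nabla\varphi|^2\,dx,$$ for a constant $C$ independent of $A$, $L$ and $\delta_0$.
   Context: $H(x_1,x_2)=\frac{1}{\pi}\sin(\pi x_1)\sin(\pi x_2)$, $v=(-\partial_{x_2}H,\partial_{x_1}H)$, $D=[-L/2,L/2]^2$. The cells are the unit squares $[k,k+1]\times[m,m+1]\subset D$ ($k,m$ integers), on whose boundaries $H=0$ and in whose interiors $H$ has a fixed sign. A level set of $H$ in a cell $Q_i$ is a set $\{x\in Q_i: H(x)=h\}$ with $h\neq0$; $H(\Gamma_i)$ denotes this value $h$. *)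

theory Defs
  imports "HOL-Analysis.Analysis"
begin

definition H :: "real \<times> real \<Rightarrow> real" where
  "H x = (1 / pi) * sin (pi * fst x) * sin (pi * snd x)"

definition d1 :: "(real \<times> real \<Rightarrow> real) \<Rightarrow> real \<times> real \<Rightarrow> real" where
  "d1 f x = deriv (\<lambda>t. f (t, snd x)) (fst x)"

definition d2 :: "(real \<times> real \<Rightarrow> real) \<Rightarrow> real \<times> real \<Rightarrow> real" where
  "d2 f x = deriv (\<lambda>t. f (fst x, t)) (snd x)"

definition grad :: "(real \<times> real \<Rightarrow> real) \<Rightarrow> real \<times> real \<Rightarrow> real \<times> real" where
  "grad f x = (d1 f x, d2 f x)"

definition lap :: "(real \<times> real \<Rightarrow> real) \<Rightarrow> real \<times> real \<Rightarrow> real" where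
  "lap f x = d1 (d1 f) x + d2 (d2 f) x"

definition v :: "real \<times> real \<Rightarrow> real \<times> real" where
  "v x = (- d2 H x, d1 H x)"

definition D :: "real \<Rightarrow> (real \<times> real) set" where
  "D L = {-L/2..L/2} \<times> {-L/2..L/2}"

definition is_cell :: "real \<Rightarrow> (real \<times> real) set \<Rightarrow> bool" where
  "is_cell L Q \<longleftrightarrow> (\<exists>k m :: int. Q = {real_of_int k..real_of_int k + 1} \<times> {real_of_int m..real_of_int m + 1}
                        \<and> Q \<subseteq> D L)"

definition C1_on :: "(real \<times> real) set \<Rightarrow> (real \<times> real \<Rightarrow> real) \<Rightarrow> bool" where
  "C1_on S f \<longleftrightarrow> (\<forall>x\<in>S. f differentiable (at x)) \<and> continuous_on S (d1 f) \<and> continuous_on S (d2 f)"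

definition C2_on :: "(real \<times> real) set \<Rightarrow> (real \<times> real \<Rightarrow> real) \<Rightarrow> bool" where
  "C2_on S f \<longleftrightarrow> C1_on S f \<and> C1_on S (d1 f) \<and> C1_on S (d2 f)"

definition principal_eigenfunction ::
  "real \<Rightarrow> real \<Rightarrow> real \<Rightarrow> (real \<times> real \<Rightarrow> real) \<Rightarrow> bool" where
  "principal_eigenfunction L A lam \<phi> \<longleftrightarrow>
     continuous_on (D L) \<phi> \<and>
     C2_on (interior (D L)) \<phi> \<and>
     (\<forall>x\<in>interior (D L). - lap \<phi> x + A * (v x \<bullet> grad \<phi> x) = lam * \<phi> x) \<and>
     (\<forall>x\<in>frontier (D L). \<phi> x = 0) \<and>
     (\<forall>x\<in>interior (D L). \<phi> x > 0)"

end

theory Submission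
  imports Defs
begin

text \<open>In local coordinates \<open>(s, t)\<close> of a cell, \<open>H = \<plusminus>sin (\<pi>s) sin (\<pi>t) / \<pi>\<close>, so the level set
  \<open>|H| = c\<close> consists of four arcs, each a graph \<open>t = \<tau>(s)\<close> or one of its mirror images. Along
  such an arc \<open>f\<close> changes at rate \<open>|v \<bullet> \<nabla>f| / |\<partial>\<^sub>2H|\<close>, so by Cauchy-Schwarz the squared
  oscillation of \<open>f\<close> on the arc is at most \<open>\<integral> ds / |\<partial>\<^sub>2H| \<lesssim> ln (1/\<delta>)\<close> times the weighted
  energy \<open>E(c) = \<integral> |v \<bullet> \<nabla>f|\<^sup>2 / |\<partial>\<^sub>2H| ds\<close> of the arc. Substituting \<open>c = |H|\<close> along vertical
  lines (the coarea formula) shows that \<open>\<integral> E(c) dc\<close> is at most \<open>\<integral>\<^sub>Q |v \<bullet> \<nabla>f|\<^sup>2\<close>, so some level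
  \<open>c \<in> (\<delta>, 3\<delta>/2)\<close> has \<open>E(c) \<lesssim> \<delta>\<^sup>-\<^sup>1 \<integral>\<^sub>Q |v \<bullet> \<nabla>f|\<^sup>2\<close>.\<close>

type_synonym scalar_field = "real \<times> real \<Rightarrow> real"

lemma isCont_slice:
  fixes g :: "'a::metric_space \<times> 'b::metric_space \<Rightarrow> 'c::topological_space"
  assumes "isCont g (c, x)"
  shows "isCont (\<lambda>x. g (c, x)) x"
  using isCont_o2[where f="\<lambda>x. (c, x)" and a=x and g=g] assms by (auto intro: continuous_intros)

lemma abs_diff_le_integral_abs_deriv:
  fixes g g' :: "real \<Rightarrow> real"
  assumes deriv: "\<And>x. x \<in> {a..b} \<Longrightarrow> (g has_real_derivative g' x) (at x)"
    and cont: "continuous_on {a..b} g'" and x: "x1 \<in> {a..b}" "x2 \<in> {a..b}"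
  shows "\<bar>g x1 - g x2\<bar> \<le> integral {a..b} (\<lambda>x. \<bar>g' x\<bar>)"
proof -
  have le: "\<bar>g y2 - g y1\<bar> \<le> integral {a..b} (\<lambda>x. \<bar>g' x\<bar>)"
    if y: "y1 \<in> {a..b}" "y2 \<in> {a..b}" "y1 \<le> y2" for y1 y2
  proof -
    have sub: "{y1..y2} \<subseteq> {a..b}" using y by auto
    have "(g' has_integral (g y2 - g y1)) {y1..y2}"
      using deriv sub y(3) has_real_derivative_iff_has_vector_derivative
      by (intro fundamental_theorem_of_calculus) (auto intro: has_vector_derivative_at_within)
    then have "\<bar>g y2 - g y1\<bar> \<le> integral {y1..y2} (\<lambda>x. \<bar>g' x\<bar>)"
      using integral_norm_bound_integral[of g' "{y1..y2}" "\<lambda>x. \<bar>g' x\<bar>"] continuous_on_subset[OF cont sub]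
      by (auto simp: integral_unique intro!: integrable_continuous_interval continuous_intros)
    also have "\<dots> \<le> integral {a..b} (\<lambda>x. \<bar>g' x\<bar>)"
      using sub cont
      by (intro integral_subset_le) (auto intro!: integrable_continuous_interval continuous_intros
          intro: continuous_on_subset)
    finally show ?thesis .
  qed
  show ?thesis
    using le[of x1 x2] le[of x2 x1] x by (cases "x1 \<le> x2") (auto simp: abs_minus_commute)
qed

lemma integral_Cauchy_Schwarz_ennreal:
  fixes u w :: "real \<Rightarrow> real"
  assumes cont: "continuous_on {a..b} u" "continuous_on {a..b} w"
    and nonneg: "\<And>x. x \<in> {a..b} \<Longrightarrow> 0 \<le> u x" "\<And>x. x \<in> {a..b} \<Longrightarrow> 0 \<le> w x"
  shows "(ennreal (integral {a..b} (\<lambda>x. u x * w x)))\<^sup>2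
    \<le> (\<integral>\<^sup>+x. indicator {a..b} x * ennreal ((u x)\<^sup>2) \<partial>lborel)
      * (\<integral>\<^sup>+x. indicator {a..b} x * ennreal ((w x)\<^sup>2) \<partial>lborel)"
proof -
  define U where "U x = ennreal (indicator {a..b} x * u x)" for x
  define W where "W x = ennreal (indicator {a..b} x * w x)" for x
  have meas: "U \<in> borel_measurable lborel" "W \<in> borel_measurable lborel"
    using borel_measurable_continuous_on_indicator[OF _ cont(1)]
      borel_measurable_continuous_on_indicator[OF _ cont(2)]
    unfolding U_def[abs_def] W_def[abs_def] by auto
  have "(\<lambda>x. u x * w x) integrable_on {a..b}"
    using cont by (intro integrable_continuous_interval continuous_intros)
  then have "ennreal (integral {a..b} (\<lambda>x. u x * w x))
      = (\<integral>\<^sup>+x. ennreal (u x * w x) * indicator {a..b} x \<partial>lborel)"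
    using nonneg by (intro nn_integral_has_integral_lebesgue'[symmetric]) (auto simp: integrable_integral)
  also have "\<dots> = (\<integral>\<^sup>+x. U x * W x \<partial>lborel)"
    using nonneg by (intro nn_integral_cong) (auto simp: U_def W_def indicator_def ennreal_mult[symmetric])
  also have "(\<dots>)\<^sup>2 \<le> (\<integral>\<^sup>+x. U x ^ 2 \<partial>lborel) * (\<integral>\<^sup>+x. W x ^ 2 \<partial>lborel)"
    by (rule Cauchy_Schwarz_nn_integral[OF meas])
  also have "\<dots> = (\<integral>\<^sup>+x. indicator {a..b} x * ennreal ((u x)\<^sup>2) \<partial>lborel)
      * (\<integral>\<^sup>+x. indicator {a..b} x * ennreal ((w x)\<^sup>2) \<partial>lborel)"
    using nonneg by (auto simp: U_def W_def indicator_def ennreal_power intro!: arg_cong2[where f="(*)"] nn_integral_cong)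
  finally show ?thesis .
qed

lemma nn_integral_small_value:
  fixes J :: "real \<Rightarrow> ennreal"
  assumes mJ: "J \<in> borel_measurable lborel" and ab: "a < b" and K: "(\<integral>\<^sup>+c. J c \<partial>lborel) \<le> K"
  shows "\<exists>c\<in>{a<..<b}. J c \<le> ennreal (2 / (b - a)) * K"
proof (rule ccontr)
  assume "\<not> ?thesis"
  then have gt: "\<And>c. c \<in> {a<..<b} \<Longrightarrow> ennreal (2 / (b - a)) * K < J c" by (simp add: not_le)
  have c0: "0 < 2 / (b - a)" using ab by simp
  have mI: "emeasure lborel {a<..<b} = ennreal (b - a)" using ab by simp
  show False
  proof (cases "K = top")
    case True
    then have "ennreal (2 / (b - a)) * K = top" using c0 by (simp add: ennreal_mult_top)
    then show False using gt[of "(a + b) / 2"] ab by simp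
  next
    case False
    have "(\<integral>\<^sup>+c. (ennreal (2 / (b - a)) * K) * indicator {a<..<b} c \<partial>lborel)
        \<le> (\<integral>\<^sup>+c. J c \<partial>lborel)"
      using gt by (intro nn_integral_mono) (auto simp: indicator_def less_imp_le)
    moreover have "(\<integral>\<^sup>+c. (ennreal (2 / (b - a)) * K) * indicator {a<..<b} c \<partial>lborel) = 2 * K"
    proof -
      have "(\<integral>\<^sup>+c. (ennreal (2 / (b - a)) * K) * indicator {a<..<b} c \<partial>lborel)
          = (ennreal (2 / (b - a)) * K) * emeasure lborel {a<..<b}"
        by (rule nn_integral_cmult_indicator) simp
      also have "\<dots> = ennreal (2 / (b - a)) * ennreal (b - a) * K" unfolding mI by (simp add: ac_simps)
      also have "ennreal (2 / (b - a)) * ennreal (b - a) = 2"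
      proof -
        have "2 / (b - a) * (b - a) = 2" using ab by (simp add: field_simps)
        moreover have "ennreal (2 / (b - a) * (b - a)) = ennreal (2 / (b - a)) * ennreal (b - a)"
          using ab by (intro ennreal_mult') simp
        ultimately show ?thesis by simp
      qed
      finally show ?thesis .
    qed
    ultimately have "2 * K \<le> K" using K by simp
    then have K0: "K = 0"
    proof -
      assume a2: "2 * K \<le> K"
      obtain r where r: "K = ennreal r" "0 \<le> r" using False by (cases K rule: ennreal_cases) auto
      have "ennreal (2 * r) \<le> ennreal r" using a2 r by (simp add: ennreal_mult')
      then have "2 * r \<le> r" using r by (simp add: ennreal_le_iff)
      then have "r = 0" using r by simp
      then show ?thesis using r by simp
    qed
    then have "(\<integral>\<^sup>+c. J c \<partial>lborel) = 0" using K by simp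
    then have "AE c in lborel. J c = 0" using nn_integral_0_iff_AE[OF mJ] by simp
    moreover have "\<And>c. J c = 0 \<Longrightarrow> c \<notin> {a<..<b}" using gt K0 by fastforce
    ultimately have "AE c in lborel. c \<notin> {a<..<b}" by (auto elim: AE_mp)
    then have "emeasure lborel {a<..<b} = 0"
      using AE_iff_measurable[of "{a<..<b}" lborel "\<lambda>c. c \<notin> {a<..<b}"]
      by (auto simp: greaterThanLessThan_def greaterThan_def lessThan_def)
    then show False using mI ab by simp
  qed
qed

lemma abs_le_sqrt_of_ennreal_le:
  assumes "ennreal (X\<^sup>2) \<le> ennreal T * I" "I \<noteq> top" "0 \<le> T"
  shows "\<bar>X\<bar> \<le> sqrt (T * enn2real I)"
proof -
  obtain r where r: "I = ennreal r" "0 \<le> r" using assms(2) by (cases I rule: ennreal_cases) auto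
  have "ennreal (X\<^sup>2) \<le> ennreal (T * r)" using assms(1) r assms(3) by (simp add: ennreal_mult)
  then have "X\<^sup>2 \<le> T * r" using r assms(3) by (simp add: ennreal_le_iff)
  then have "sqrt (X\<^sup>2) \<le> sqrt (T * r)" by (rule real_sqrt_le_mono)
  then show ?thesis using r by simp
qed

lemma sum4_squared_le: "((a::real) + b + c + d)\<^sup>2 \<le> 4 * (a\<^sup>2 + b\<^sup>2 + c\<^sup>2 + d\<^sup>2)"
proof -
  have "0 \<le> (a - b)\<^sup>2 + (a - c)\<^sup>2 + (a - d)\<^sup>2 + (b - c)\<^sup>2 + (b - d)\<^sup>2 + (c - d)\<^sup>2" by simp
  then show ?thesis by (simp add: power2_eq_square algebra_simps)
qed

lemma ennreal_add4: "(x::ennreal) + x + x + x = 4 * x"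
proof -
  have "(4::ennreal) = 1 + 1 + 1 + 1" by simp
  then show ?thesis by (simp only: distrib_right mult_1)
qed

section \<open>The stream function and its cells\<close>

definition H_d1 :: scalar_field where
  "H_d1 x = cos (pi * fst x) * sin (pi * snd x)"

definition H_d2 :: scalar_field where
  "H_d2 x = sin (pi * fst x) * cos (pi * snd x)"

definition vgrad :: "scalar_field \<Rightarrow> scalar_field \<Rightarrow> scalar_field" where
  "vgrad P1 P2 x = - H_d2 x * P1 x + H_d1 x * P2 x"

definition open_cell :: "real \<Rightarrow> real \<Rightarrow> (real \<times> real) set" where
  "open_cell k m = {k<..<k+1} \<times> {m<..<m+1}"

definition cont_grad_on :: "(real \<times> real) set \<Rightarrow> scalar_field \<Rightarrow> scalar_field \<Rightarrow> scalar_field \<Rightarrow> bool"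
where
  "cont_grad_on S f P1 P2 \<longleftrightarrow>
     (\<forall>x\<in>S. (f has_derivative (\<lambda>h. P1 x * fst h + P2 x * snd h)) (at x)) \<and>
     continuous_on S P1 \<and> continuous_on S P2"

lemma open_open_cell: "open (open_cell k m)"
  unfolding open_cell_def by (intro open_Times open_greaterThanLessThan)

lemma sin_pi_int: "sin (pi * real_of_int k) = 0"
  using sin_times_pi_eq_0[of "real_of_int k"] by (simp add: mult.commute)

lemma cos_pi_int_squared: "(cos (pi * real_of_int k))\<^sup>2 = 1"
  using sin_pi_int[of k] sin_cos_squared_add[of "pi * real_of_int k"] by simp

lemma abs_cos_pi_int: "\<bar>cos (pi * real_of_int k)\<bar> = 1"
  using cos_pi_int_squared[of k] by (simp add: power2_eq_1_iff abs_if split: if_splits)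

lemma sin_pi_int_add: "sin (pi * (real_of_int k + s)) = cos (pi * real_of_int k) * sin (pi * s)"
  by (simp add: distrib_left sin_add sin_pi_int)

lemma cos_pi_int_add: "cos (pi * (real_of_int k + s)) = cos (pi * real_of_int k) * cos (pi * s)"
  by (simp add: distrib_left cos_add sin_pi_int)

lemma cos_pi_odd: "cos (pi * (2 * real_of_int m + 1)) = -1"
proof -
  have "pi * (2 * real_of_int m + 1) = 2 * (pi * real_of_int m) + pi"
    by (simp add: algebra_simps)
  then have "cos (pi * (2 * real_of_int m + 1)) = - cos (2 * (pi * real_of_int m))"
    by (simp add: cos_add)
  also have "\<dots> = -1"
    using cos_pi_int_squared[of m] sin_pi_int[of m] by (simp add: cos_double)
  finally show ?thesis .
qed

lemma sin_pi_odd: "sin (pi * (2 * real_of_int m + 1)) = 0"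
  using sin_pi_int[of "2 * m + 1"] by simp

lemma sin_pi_one_minus: "sin (pi * (1 - s)) = sin (pi * s)"
proof -
  have "pi * (1 - s) = pi - pi * s" by (simp add: algebra_simps)
  then show ?thesis by simp
qed

lemma pi_times_half_range: "0 \<le> t \<Longrightarrow> t \<le> 1/2 \<Longrightarrow> 0 \<le> pi * t \<and> pi * t \<le> pi / 2"
  using mult_left_mono[of t "1/2" pi] by simp

lemma sin_pi_mono:
  assumes "0 \<le> a" "a \<le> b" "b \<le> 1/2"
  shows "sin (pi * a) \<le> sin (pi * b)"
proof -
  have "0 \<le> pi * a" "pi * a \<le> pi * b" "pi * b \<le> pi / 2"
    using assms pi_times_half_range[of b] by auto
  then show ?thesis using pi_gt_zero by (intro sin_monotone_2pi_le) linarith+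
qed

lemma sin_pi_strict_mono:
  assumes "0 \<le> a" "a < b" "b \<le> 1/2"
  shows "sin (pi * a) < sin (pi * b)"
proof -
  have "0 \<le> pi * a" "pi * a < pi * b" "pi * b \<le> pi / 2"
    using assms pi_times_half_range[of b] by auto
  then show ?thesis using pi_gt_zero by (intro sin_monotone_2pi) linarith+
qed

lemma level_range_bounds:
  assumes "0 < d" "d < 1 / (2 * pi)" "d \<le> c" "c \<le> 3/2 * d"
  shows "0 < c" "pi * c < 3/4"
proof -
  show "0 < c" using assms by linarith
  have "pi * c \<le> pi * (3/2 * d)" using assms by simp
  moreover have "2 * pi * d < 1" using assms(2) by (simp add: field_simps)
  ultimately show "pi * c < 3/4" by linarith
qed

lemma ln_inverse_pos:
  assumes "0 < d" "d < 1 / (2 * pi)"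
  shows "0 < ln (1 / d)"
proof -
  have "2 * 2 * d \<le> 2 * pi * d" using assms pi_ge_two by (intro mult_right_mono) auto
  moreover have "2 * pi * d < 1" using assms by (simp add: field_simps)
  ultimately have "d < 1" by linarith
  then show ?thesis using assms by simp
qed

lemma H_cell_coords:
  "H (real_of_int k + s, real_of_int m + t) =
     cos (pi * k) * cos (pi * m) * (sin (pi * s) * sin (pi * t)) / pi"
  unfolding H_def by (simp add: sin_pi_int_add)

lemma d1_H: "d1 H x = H_d1 x"
proof -
  have "((\<lambda>t. H (t, snd x)) has_real_derivative H_d1 x) (at (fst x))"
    unfolding H_def H_d1_def by (auto intro!: derivative_eq_intros)
  then show ?thesis unfolding d1_def by (rule DERIV_imp_deriv)
qed

lemma d2_H: "d2 H x = H_d2 x"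
proof -
  have "((\<lambda>t. H (fst x, t)) has_real_derivative H_d2 x) (at (snd x))"
    unfolding H_def H_d2_def by (auto intro!: derivative_eq_intros)
  then show ?thesis unfolding d2_def by (rule DERIV_imp_deriv)
qed

lemma inner_v_grad: "v x \<bullet> grad f x = vgrad (d1 f) (d2 f) x"
  by (simp add: v_def grad_def vgrad_def d1_H d2_H)

lemma d1_eq_derivative:
  assumes "(f has_derivative f') (at x)"
  shows "d1 f x = f' (1, 0)"
proof -
  have "((\<lambda>t. (t, snd x)) has_derivative (\<lambda>h. (h, 0))) (at (fst x))"
    by (intro has_derivative_Pair has_derivative_ident has_derivative_const)
  moreover have "(f has_derivative f') (at ((\<lambda>t. (t, snd x)) (fst x)))"
    using assms by simp
  ultimately have "((\<lambda>t. f (t, snd x)) has_derivative (\<lambda>h. f' (h, 0))) (at (fst x))"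
    by (rule has_derivative_compose)
  moreover have "(\<lambda>h. f' (h, 0)) = (*) (f' (1, 0))"
  proof
    fix h :: real
    show "f' (h, 0) = f' (1, 0) * h"
      using linear_scale[OF has_derivative_linear[OF assms], of h "(1, 0)"] by simp
  qed
  ultimately have "((\<lambda>t. f (t, snd x)) has_real_derivative f' (1, 0)) (at (fst x))"
    unfolding has_field_derivative_def by simp
  then show ?thesis unfolding d1_def by (rule DERIV_imp_deriv)
qed

lemma d2_eq_derivative:
  assumes "(f has_derivative f') (at x)"
  shows "d2 f x = f' (0, 1)"
proof -
  have "((\<lambda>t. (fst x, t)) has_derivative (\<lambda>h. (0, h))) (at (snd x))"
    by (intro has_derivative_Pair has_derivative_ident has_derivative_const)
  moreover have "(f has_derivative f') (at ((\<lambda>t. (fst x, t)) (snd x)))"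
    using assms by simp
  ultimately have "((\<lambda>t. f (fst x, t)) has_derivative (\<lambda>h. f' (0, h))) (at (snd x))"
    by (rule has_derivative_compose)
  moreover have "(\<lambda>h. f' (0, h)) = (*) (f' (0, 1))"
  proof
    fix h :: real
    show "f' (0, h) = f' (0, 1) * h"
      using linear_scale[OF has_derivative_linear[OF assms], of h "(0, 1)"] by simp
  qed
  ultimately have "((\<lambda>t. f (fst x, t)) has_real_derivative f' (0, 1)) (at (snd x))"
    unfolding has_field_derivative_def by simp
  then show ?thesis unfolding d2_def by (rule DERIV_imp_deriv)
qed

lemma has_derivative_partials:
  assumes "f differentiable (at x)"
  shows "(f has_derivative (\<lambda>h. d1 f x * fst h + d2 f x * snd h)) (at x)"
proof -
  obtain f' where f': "(f has_derivative f') (at x)"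
    using assms differentiable_def by blast
  note lin = has_derivative_linear[OF f']
  have "(\<lambda>h. d1 f x * fst h + d2 f x * snd h) = f'"
  proof
    fix h :: "real \<times> real"
    have "f' h = f' (fst h *\<^sub>R (1, 0) + snd h *\<^sub>R (0, 1))" by simp
    also have "\<dots> = fst h * f' (1, 0) + snd h * f' (0, 1)"
      by (simp only: linear_add[OF lin] linear_scale[OF lin] real_scaleR_def)
    finally show "d1 f x * fst h + d2 f x * snd h = f' h"
      by (simp add: d1_eq_derivative[OF f'] d2_eq_derivative[OF f'])
  qed
  then show ?thesis using f' by simp
qed

lemma cont_grad_on_C1_on:
  assumes "C1_on S f" "open T" "T \<subseteq> S"
  shows "cont_grad_on T f (d1 f) (d2 f)"
  using assms has_derivative_partials continuous_on_subset
  unfolding C1_on_def cont_grad_on_def by blast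

section \<open>Parametrisation of the level curves\<close>

text \<open>In the local coordinates \<open>s = x\<^sub>1 - k\<close>, \<open>t = x\<^sub>2 - m\<close> of a cell, \<open>|H| = c\<close> reads
  \<open>sin (\<pi>s) sin (\<pi>t) = \<pi>c\<close>. For \<open>s \<in> [arc_end c, 1 - arc_end c]\<close> its solution with \<open>t \<le> 1/2\<close> is
  \<open>t = arc c s\<close>; at \<open>s = arc_end c\<close> the curve meets the diagonal. The clamping in \<open>arc_end\<close>
  only serves to make it continuous on all of \<open>\<real>\<close>.\<close>

definition arc_end :: "real \<Rightarrow> real" where
  "arc_end c = arcsin (max (-1) (min 1 (sqrt (pi * c)))) / pi"

lemma arc_end_eq: "0 < c \<Longrightarrow> pi * c < 1 \<Longrightarrow> arc_end c = arcsin (sqrt (pi * c)) / pi"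
proof -
  assume a: "0 < c" "pi * c < 1"
  have "sqrt (pi * c) < sqrt 1" using a by (intro real_sqrt_less_mono) auto
  then have s1: "sqrt (pi * c) < 1" by simp
  have s0: "0 < sqrt (pi * c)" using a by simp
  have "min 1 (sqrt (pi * c)) = sqrt (pi * c)" by (rule min_absorb2) (use s1 in linarith)
  moreover have "max (-1) (sqrt (pi * c)) = sqrt (pi * c)" by (rule max_absorb2) (use s0 in linarith)
  ultimately show ?thesis unfolding arc_end_def by simp
qed

definition arc :: "real \<Rightarrow> real \<Rightarrow> real" where
  "arc c s = arcsin (pi * c / sin (pi * s)) / pi"

text \<open>On the arc, \<open>arc_speed c s = sin (\<pi>s) cos (\<pi> arc c s) = |\<partial>\<^sub>2H|\<close>.\<close>

definition arc_speed :: "real \<Rightarrow> real \<Rightarrow> real" where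
  "arc_speed c s = sqrt ((sin (pi * s))\<^sup>2 - (pi * c)\<^sup>2)"

definition arc_path :: "real \<Rightarrow> real \<Rightarrow> real \<Rightarrow> real \<Rightarrow> real \<times> real" where
  "arc_path k m c x = (x, m + arc c (x - k))"

lemma arc_end_facts:
  assumes "0 < c" "pi * c < 3/4"
  shows "0 < arc_end c" "arc_end c < 1/2" "sin (pi * arc_end c) = sqrt (pi * c)"
    "0 < sqrt (pi * c)" "sqrt (pi * c) < 1" "pi * c < sqrt (pi * c)"
proof -
  have bbe: "arc_end c = arcsin (sqrt (pi * c)) / pi" using assms by (intro arc_end_eq) auto
  have pc: "0 < pi * c" using assms by simp
  show sp: "0 < sqrt (pi * c)" using pc by simp
  show s1: "sqrt (pi * c) < 1" proof -
    have "sqrt (pi * c) < sqrt 1" using assms by (intro real_sqrt_less_mono) auto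
    then show ?thesis by simp
  qed
  have "arcsin 0 < arcsin (sqrt (pi * c))" by (rule arcsin_less_arcsin) (use sp s1 in auto)
  then show "0 < arc_end c" unfolding bbe by simp
  have "arcsin (sqrt (pi * c)) < pi / 2" using arcsin_lt_bounded[of "sqrt (pi*c)"] sp s1 by auto
  then show "arc_end c < 1/2" unfolding bbe by (simp add: field_simps)
  have "sin (arcsin (sqrt (pi * c))) = sqrt (pi * c)"
    by (rule sin_arcsin) (use sp s1 in linarith)+
  then show "sin (pi * arc_end c) = sqrt (pi * c)" unfolding bbe by simp
  have "pi * c < 1" using assms by simp
  then have "sqrt (pi * c) * sqrt (pi * c) < 1 * sqrt (pi * c)"
    using sp s1 by (intro mult_strict_right_mono) auto
  then show "pi * c < sqrt (pi * c)" using pc by simp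
qed

lemma sqrt_le_sin_on_arc:
  assumes "0 < c" "pi * c < 3/4" "arc_end c \<le> s" "s \<le> 1 - arc_end c"
  shows "sqrt (pi * c) \<le> sin (pi * s)"
proof (cases "s \<le> 1/2")
  case True
  have "sin (pi * arc_end c) \<le> sin (pi * s)"
    using arc_end_facts[OF assms(1,2)] assms True by (intro sin_pi_mono) auto
  then show ?thesis using arc_end_facts[OF assms(1,2)] by simp
next
  case False
  have "sin (pi * arc_end c) \<le> sin (pi * (1 - s))"
    using arc_end_facts[OF assms(1,2)] assms False by (intro sin_pi_mono) auto
  then show ?thesis using arc_end_facts[OF assms(1,2)] by (simp add: sin_pi_one_minus)
qed

lemma on_arc_if_sqrt_le_sin:
  assumes "0 < c" "pi * c < 3/4" "0 \<le> s" "s \<le> 1" "sqrt (pi * c) \<le> sin (pi * s)"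
  shows "arc_end c \<le> s \<and> s \<le> 1 - arc_end c"
proof (rule ccontr)
  assume "\<not> (arc_end c \<le> s \<and> s \<le> 1 - arc_end c)"
  then consider "s < arc_end c" | "1 - arc_end c < s" by linarith
  then show False
  proof cases
    case 1
    then have "sin (pi * s) < sin (pi * arc_end c)"
      using arc_end_facts[OF assms(1,2)] assms by (intro sin_pi_strict_mono) auto
    then show False using arc_end_facts[OF assms(1,2)] assms by simp
  next
    case 2
    then have "sin (pi * (1 - s)) < sin (pi * arc_end c)"
      using arc_end_facts[OF assms(1,2)] assms by (intro sin_pi_strict_mono) auto
    then show False using arc_end_facts[OF assms(1,2)] assms by (simp add: sin_pi_one_minus)
  qed
qed

lemma arc_facts:
  assumes "0 < c" "pi * c < 3/4" "arc_end c \<le> s" "s \<le> 1 - arc_end c"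
  shows "0 < sin (pi * s)" "0 < pi * c / sin (pi * s)" "pi * c / sin (pi * s) < 1"
    "pi * c / sin (pi * s) \<le> sqrt (pi * c)"
    "sin (pi * arc c s) = pi * c / sin (pi * s)"
    "cos (pi * arc c s) = sqrt (1 - (pi * c / sin (pi * s))\<^sup>2)"
    "0 < arc c s" "arc c s < 1/2"
    "arc_speed c s = sin (pi * s) * sqrt (1 - (pi * c / sin (pi * s))\<^sup>2)"
    "sin (pi * s) / 2 \<le> arc_speed c s" "0 < arc_speed c s"
    "0 < s" "s < 1"
proof -
  note cf = arc_end_facts[OF assms(1,2)]
  have sg: "sqrt (pi * c) \<le> sin (pi * s)" by (rule sqrt_le_sin_on_arc[OF assms])
  show sp: "0 < sin (pi * s)" using cf sg by linarith
  have pc: "0 < pi * c" using assms by simp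
  show rp: "0 < pi * c / sin (pi * s)" using sp pc by simp
  have "pi * c = sqrt (pi * c) * sqrt (pi * c)" using pc by simp
  also have "\<dots> \<le> sqrt (pi * c) * sin (pi * s)" using sg cf by (intro mult_left_mono) auto
  finally have "pi * c \<le> sqrt (pi * c) * sin (pi * s)" .
  then show rs: "pi * c / sin (pi * s) \<le> sqrt (pi * c)" using sp by (simp add: divide_le_eq)
  then show r1: "pi * c / sin (pi * s) < 1" using cf by linarith
  show "sin (pi * arc c s) = pi * c / sin (pi * s)" unfolding arc_def using rp r1 by simp
  show "cos (pi * arc c s) = sqrt (1 - (pi * c / sin (pi * s))\<^sup>2)" unfolding arc_def
    using rp r1 by (simp add: cos_arcsin)
  have "arcsin 0 < arcsin (pi * c / sin (pi * s))" by (rule arcsin_less_arcsin) (use rp r1 in auto)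
  then show "0 < arc c s" unfolding arc_def by simp
  have "arcsin (pi * c / sin (pi * s)) < pi / 2" using arcsin_lt_bounded[of "pi * c / sin (pi * s)"] rp r1 by auto
  then show "arc c s < 1/2" unfolding arc_def by (simp add: field_simps)
  have "(sin (pi * s))\<^sup>2 - (pi * c)\<^sup>2 = (sin (pi * s))\<^sup>2 * (1 - (pi * c / sin (pi * s))\<^sup>2)"
    using sp by (simp add: field_simps)
  then show gge: "arc_speed c s = sin (pi * s) * sqrt (1 - (pi * c / sin (pi * s))\<^sup>2)"
    unfolding arc_speed_def using sp by (simp add: real_sqrt_mult)
  have "(pi * c / sin (pi * s))\<^sup>2 \<le> (sqrt (pi * c))\<^sup>2" using rs rp by (intro power_mono) auto
  also have "\<dots> = pi * c" using pc by simp
  finally have "(pi * c / sin (pi * s))\<^sup>2 \<le> 3/4" using assms by linarith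
  then have "1/4 \<le> 1 - (pi * c / sin (pi * s))\<^sup>2" by linarith
  then have "sqrt (1/4) \<le> sqrt (1 - (pi * c / sin (pi * s))\<^sup>2)" by (rule real_sqrt_le_mono)
  moreover have "sqrt (1/4::real) = 1/2" by (simp add: real_sqrt_divide)
  ultimately have "1/2 \<le> sqrt (1 - (pi * c / sin (pi * s))\<^sup>2)" by simp
  then show "sin (pi * s) / 2 \<le> arc_speed c s" unfolding gge using sp
    by (metis divide_le_eq_numeral1(1) mult_left_mono less_eq_real_def mult.commute times_divide_eq_right mult_1_right)
  then show "0 < arc_speed c s" using sp by linarith
  show "0 < s" using cf assms by linarith
  show "s < 1" using cf assms by linarith
qed

lemma arc_eqI:
  assumes "0 \<le> t" "t \<le> 1/2" "0 < sin (pi * s)" "sin (pi * s) * sin (pi * t) = pi * c"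
  shows "arc c s = t"
proof -
  have "pi * c / sin (pi * s) = sin (pi * t)" using assms(3,4) by (simp add: field_simps)
  then have "arc c s = arcsin (sin (pi * t)) / pi" unfolding arc_def by simp
  also have "\<dots> = t"
    using pi_times_half_range[OF assms(1,2)] pi_gt_zero by (subst arcsin_sin) (linarith, linarith, simp)
  finally show ?thesis .
qed

lemma arc_arc_end:
  assumes c: "0 < c" "pi * c < 3/4"
  shows "arc c (arc_end c) = arc_end c" "arc c (1 - arc_end c) = arc_end c"
proof -
  note cf = arc_end_facts[OF c]
  have e: "sin (pi * arc_end c) * sin (pi * arc_end c) = pi * c" using cf c by simp
  show "arc c (arc_end c) = arc_end c" by (rule arc_eqI) (use cf e in auto)
  show "arc c (1 - arc_end c) = arc_end c" by (rule arc_eqI) (use cf e sin_pi_one_minus in auto)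
qed

lemma square_minus_square_sin: "(a::real)\<^sup>2 - (a * sin u)\<^sup>2 = (a * cos u)\<^sup>2"
proof -
  have "a\<^sup>2 * (sin u)\<^sup>2 + a\<^sup>2 * (cos u)\<^sup>2 = a\<^sup>2" by (metis distrib_left sin_cos_squared_add mult_1_right)
  then show ?thesis by (simp add: power_mult_distrib)
qed

lemma arc_speed_of_level:
  assumes "0 \<le> t" "t \<le> 1/2" "0 < sin (pi * s)"
  shows "arc_speed (sin (pi * s) * sin (pi * t) / pi) s = sin (pi * s) * cos (pi * t)"
proof -
  have "0 \<le> cos (pi * t)"
    using pi_times_half_range[OF assms(1,2)] pi_gt_zero by (intro cos_ge_zero) linarith+
  moreover have "(sin (pi * s))\<^sup>2 - (sin (pi * s) * sin (pi * t))\<^sup>2 = (sin (pi * s) * cos (pi * t))\<^sup>2"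
    by (rule square_minus_square_sin)
  ultimately show ?thesis
    using assms(3) unfolding arc_speed_def by simp
qed

lemma level_point_on_arc:
  assumes c: "0 < c" "pi * c < 3/4" and s: "0 \<le> s" "s \<le> 1" and t: "0 \<le> t" "t \<le> 1"
    and e: "sin (pi * s) * sin (pi * t) = pi * c"
    and le: "min t (1 - t) \<le> min s (1 - s)"
  shows "arc_end c \<le> s \<and> s \<le> 1 - arc_end c \<and> (t = arc c s \<or> t = 1 - arc c s)"
proof -
  define s' where "s' = min s (1 - s)"
  define t' where "t' = min t (1 - t)"
  have ss: "sin (pi * s) = sin (pi * s')" unfolding s'_def by (simp add: min_def sin_pi_one_minus)
  have tt: "sin (pi * t) = sin (pi * t')" unfolding t'_def by (simp add: min_def sin_pi_one_minus)
  have s'r: "0 \<le> s'" "s' \<le> 1/2" unfolding s'_def using s by (auto simp: min_def)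
  have t'r: "0 \<le> t'" "t' \<le> 1/2" unfolding t'_def using t by (auto simp: min_def)
  have "sin (pi * t') \<le> sin (pi * s')" using t'r s'r le unfolding s'_def[symmetric] t'_def[symmetric]
    by (intro sin_pi_mono) auto
  moreover have st0: "0 \<le> sin (pi * t')" using pi_times_half_range[OF t'r] pi_gt_zero by (intro sin_ge_zero) linarith+
  moreover have ss0: "0 \<le> sin (pi * s')" using pi_times_half_range[OF s'r] pi_gt_zero by (intro sin_ge_zero) linarith+
  ultimately have "sin (pi * s') * sin (pi * t') \<le> sin (pi * s') * sin (pi * s')" by (intro mult_left_mono)
  then have "pi * c \<le> (sin (pi * s))\<^sup>2" using e ss tt by (simp add: power2_eq_square)
  then have "sqrt (pi * c) \<le> sqrt ((sin (pi * s))\<^sup>2)" by (rule real_sqrt_le_mono)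
  then have sg: "sqrt (pi * c) \<le> sin (pi * s)" using ss ss0 by simp
  have ab: "arc_end c \<le> s \<and> s \<le> 1 - arc_end c" by (rule on_arc_if_sqrt_le_sin[OF c s sg])
  have sp: "0 < sin (pi * s)" using sg arc_end_facts[OF c] by linarith
  have "arc c s = t'" by (rule arc_eqI[OF t'r sp]) (use e tt in simp)
  then have "t = arc c s \<or> t = 1 - arc c s" unfolding t'_def by (auto simp: min_def)
  then show ?thesis using ab by simp
qed

lemma level_curve_cases:
  assumes c: "0 < c" "pi * c < 3/4" and s: "0 \<le> s" "s \<le> 1" and t: "0 \<le> t" "t \<le> 1"
    and e: "sin (pi * s) * sin (pi * t) = pi * c"
  shows "arc_end c \<le> s \<and> s \<le> 1 - arc_end c \<and> (t = arc c s \<or> t = 1 - arc c s)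
    \<or> arc_end c \<le> t \<and> t \<le> 1 - arc_end c \<and> (s = arc c t \<or> s = 1 - arc c t)"
proof (cases "min t (1 - t) \<le> min s (1 - s)")
  case True
  then show ?thesis using level_point_on_arc[OF c s t e] by blast
next
  case False
  have "sin (pi * t) * sin (pi * s) = pi * c" using e by (simp add: mult.commute)
  with False show ?thesis using level_point_on_arc[OF c t s] by force
qed

definition arc_slope :: "real \<Rightarrow> real \<Rightarrow> real" where
  "arc_slope c s = - (pi * c * cos (pi * s)) / ((sin (pi * s))\<^sup>2 * sqrt (1 - (pi * c / sin (pi * s))\<^sup>2))"

definition arc_path_deriv ::
  "real \<Rightarrow> real \<Rightarrow> real \<Rightarrow> scalar_field \<Rightarrow> scalar_field \<Rightarrow> real \<Rightarrow> real" where
  "arc_path_deriv k m c P1 P2 x = P1 (arc_path k m c x) + arc_slope c (x - k) * P2 (arc_path k m c x)"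

lemma arc_has_derivative:
  assumes "0 < sin (pi * s)" "0 < pi * c / sin (pi * s)" "pi * c / sin (pi * s) < 1"
  shows "(arc c has_real_derivative arc_slope c s) (at s)"
proof -
  let ?r = "pi * c / sin (pi * s)"
  have d1: "((\<lambda>s. pi * c / sin (pi * s)) has_real_derivative (- (pi * c) * (pi * cos (pi * s)) / (sin (pi * s))\<^sup>2)) (at s)"
    using assms(1) by (auto intro!: derivative_eq_intros simp: power2_eq_square)
  have d2: "(arcsin has_real_derivative inverse (sqrt (1 - ?r\<^sup>2))) (at ?r)"
    by (rule DERIV_arcsin) (use assms in auto)
  have "((\<lambda>s. arcsin (pi * c / sin (pi * s))) has_real_derivative
      inverse (sqrt (1 - ?r\<^sup>2)) * (- (pi * c) * (pi * cos (pi * s)) / (sin (pi * s))\<^sup>2)) (at s)"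
    by (rule DERIV_chain2[OF d2 d1])
  then have "((\<lambda>s. arcsin (pi * c / sin (pi * s)) / pi) has_real_derivative
      inverse (sqrt (1 - ?r\<^sup>2)) * (- (pi * c) * (pi * cos (pi * s)) / (sin (pi * s))\<^sup>2) / pi) (at s)"
    by (rule DERIV_cdivide)
  moreover have "inverse (sqrt (1 - ?r\<^sup>2)) * (- (pi * c) * (pi * cos (pi * s)) / (sin (pi * s))\<^sup>2) / pi = arc_slope c s"
    unfolding arc_slope_def by (simp add: field_simps)
  ultimately show ?thesis unfolding arc_def[abs_def] by simp
qed

lemma arc_path_in_open_cell:
  assumes "0 < c" "pi * c < 3/4" "arc_end c \<le> x - k" "x - k \<le> 1 - arc_end c"
  shows "arc_path k m c x \<in> open_cell k m"
  using arc_facts[OF assms] unfolding arc_path_def open_cell_def by auto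

lemma arc_path_has_derivative:
  assumes g: "cont_grad_on (open_cell k m) f P1 P2"
    and a: "0 < c" "pi * c < 3/4" "arc_end c \<le> x - k" "x - k \<le> 1 - arc_end c"
  shows "((\<lambda>x. f (arc_path k m c x)) has_real_derivative arc_path_deriv k m c P1 P2 x) (at x)"
proof -
  note af = arc_facts[OF a(1-4)]
  have dt: "(arc c has_real_derivative arc_slope c (x - k)) (at (x - k))"
    by (rule arc_has_derivative) (use af in auto)
  have dk: "((\<lambda>x. x - k) has_real_derivative 1) (at x)" by (auto intro!: derivative_eq_intros)
  have "((\<lambda>x. arc c (x - k)) has_real_derivative arc_slope c (x - k) * 1) (at x)"
    by (rule DERIV_chain2[where g="\<lambda>x. x - k", OF _ dk]) (use dt in simp)
  then have "((\<lambda>x. m + arc c (x - k)) has_real_derivative 0 + arc_slope c (x - k) * 1) (at x)"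
    by (intro DERIV_add DERIV_const)
  then have dt2: "((\<lambda>x. m + arc c (x - k)) has_real_derivative arc_slope c (x - k)) (at x)" by simp
  have dg: "(arc_path k m c has_derivative (\<lambda>h. (h, arc_slope c (x - k) * h))) (at x)"
    unfolding arc_path_def[abs_def]
    by (intro has_derivative_Pair has_derivative_ident has_field_derivative_imp_has_derivative[OF dt2])
  have df: "(f has_derivative (\<lambda>h. P1 (arc_path k m c x) * fst h + P2 (arc_path k m c x) * snd h)) (at (arc_path k m c x))"
    using g arc_path_in_open_cell[OF a] unfolding cont_grad_on_def by blast
  have "((\<lambda>x. f (arc_path k m c x)) has_derivative
      (\<lambda>h. P1 (arc_path k m c x) * fst (h, arc_slope c (x - k) * h) + P2 (arc_path k m c x) * snd (h, arc_slope c (x - k) * h))) (at x)"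
    by (rule has_derivative_compose[OF dg df])
  moreover have "(\<lambda>h. P1 (arc_path k m c x) * fst (h, arc_slope c (x - k) * h) + P2 (arc_path k m c x) * snd (h, arc_slope c (x - k) * h))
      = (*) (arc_path_deriv k m c P1 P2 x)"
    unfolding arc_path_deriv_def by (rule ext) (simp add: algebra_simps)
  ultimately show ?thesis unfolding has_field_derivative_def by simp
qed

lemma vgrad_arc_path:
  fixes k m :: int and x :: real
  assumes a: "0 < c" "pi * c < 3/4" "arc_end c \<le> x - real_of_int k" "x - real_of_int k \<le> 1 - arc_end c"
  shows "vgrad P1 P2 (arc_path k m c x) = - (cos (pi * k) * cos (pi * m)) * arc_speed c (x - real_of_int k) * arc_path_deriv k m c P1 P2 x"
proof -
  define s where "s = x - k"
  have xs: "x = real_of_int k + s" unfolding s_def by simp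
  note af = arc_facts[OF a[folded s_def]]
  define q where "q = sqrt (1 - (pi * c / sin (pi * s))\<^sup>2)"
  have q0: "0 < q" unfolding q_def using af by (simp add: power_less_one_iff abs_less_iff)
  have sn: "sin (pi * s) \<noteq> 0" using af by simp
  have H1g: "H_d1 (arc_path k m c x) = cos (pi * k) * cos (pi * s) * (cos (pi * m) * (pi * c / sin (pi * s)))"
    unfolding H_d1_def arc_path_def using af by (simp add: xs s_def[symmetric] sin_pi_int_add cos_pi_int_add)
  have H2g: "H_d2 (arc_path k m c x) = cos (pi * k) * sin (pi * s) * (cos (pi * m) * q)"
    unfolding H_d2_def arc_path_def q_def using af by (simp add: xs s_def[symmetric] sin_pi_int_add cos_pi_int_add)
  have ggq: "arc_speed c s = sin (pi * s) * q" using af unfolding q_def by simp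
  have tq: "arc_slope c s = - (pi * c * cos (pi * s)) / ((sin (pi * s))\<^sup>2 * q)" unfolding arc_slope_def q_def by simp
  show ?thesis
    unfolding vgrad_def arc_path_deriv_def s_def[symmetric] H1g H2g ggq tq
    using q0 sn by (simp add: field_simps power2_eq_square)
qed

lemma isCont_arc:
  assumes "0 < sin (pi * (snd p0 - k))" "0 < pi * fst p0 / sin (pi * (snd p0 - k))"
    "pi * fst p0 / sin (pi * (snd p0 - k)) < 1"
  shows "isCont (\<lambda>p::real\<times>real. arc (fst p) (snd p - k)) p0"
proof -
  have c1: "isCont (\<lambda>p::real\<times>real. pi * fst p / sin (pi * (snd p - k))) p0"
    using assms(1) by (intro continuous_intros) auto
  have "isCont (\<lambda>p::real\<times>real. arcsin (pi * fst p / sin (pi * (snd p - k)))) p0"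
    by (rule isCont_o2[OF c1 isCont_arcsin]) (use assms in auto)
  then show ?thesis unfolding arc_def by (intro continuous_intros) auto
qed

lemma isCont_arc_slope:
  assumes "0 < sin (pi * (snd p0 - k))" "0 < pi * fst p0 / sin (pi * (snd p0 - k))"
    "pi * fst p0 / sin (pi * (snd p0 - k)) < 1"
  shows "isCont (\<lambda>p::real\<times>real. arc_slope (fst p) (snd p - k)) p0"
proof -
  have "0 < 1 - (pi * fst p0 / sin (pi * (snd p0 - k)))\<^sup>2"
    using assms by (simp add: power_less_one_iff abs_less_iff)
  then have "sqrt (1 - (pi * fst p0 / sin (pi * (snd p0 - k)))\<^sup>2) \<noteq> 0" by simp
  then show ?thesis unfolding arc_slope_def using assms(1) by (intro continuous_intros) auto
qed

lemma isCont_arc_speed: "isCont (\<lambda>p::real\<times>real. arc_speed (fst p) (snd p - k)) p0"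
  unfolding arc_speed_def by (intro continuous_intros)

lemma isCont_vgrad:
  assumes "cont_grad_on (open_cell k m) f P1 P2" "y \<in> open_cell k m"
  shows "isCont (vgrad P1 P2) y"
proof -
  have "isCont P1 y" "isCont P2 y"
    using assms open_open_cell[of k m] continuous_on_eq_continuous_at unfolding cont_grad_on_def by blast+
  then show ?thesis unfolding vgrad_def[abs_def] H_d1_def H_d2_def by (intro continuous_intros) auto
qed

lemma isCont_arc_path:
  assumes a: "0 < fst p0" "pi * fst p0 < 3/4" "arc_end (fst p0) \<le> snd p0 - k" "snd p0 - k \<le> 1 - arc_end (fst p0)"
  shows "isCont (\<lambda>p::real\<times>real. arc_path k m (fst p) (snd p)) p0"
proof -
  note af = arc_facts[OF a]
  have "isCont (\<lambda>p::real\<times>real. arc (fst p) (snd p - k)) p0"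
    by (rule isCont_arc) (use af in auto)
  then show ?thesis unfolding arc_path_def by (intro continuous_intros) auto
qed

lemma isCont_along_arc:
  assumes g: "cont_grad_on (open_cell k m) f P1 P2"
    and a: "0 < c" "pi * c < 3/4" "arc_end c \<le> x - k" "x - k \<le> 1 - arc_end c"
  shows "isCont (arc_path_deriv k m c P1 P2) x" "isCont (\<lambda>x. vgrad P1 P2 (arc_path k m c x)) x"
proof -
  note ap = arc_facts[OF a]
  have "isCont (\<lambda>x. arc c (x - k)) x"
    using isCont_slice[OF isCont_arc[of "(c, x)" k]] ap by simp
  then have path: "isCont (arc_path k m c) x"
    unfolding arc_path_def[abs_def] by (intro continuous_intros)
  have "isCont P1 (arc_path k m c x)" "isCont P2 (arc_path k m c x)"
    using g arc_path_in_open_cell[OF a] open_open_cell[of k m] continuous_on_eq_continuous_at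
    unfolding cont_grad_on_def by blast+
  moreover have "isCont (\<lambda>x. arc_slope c (x - k)) x"
    using isCont_slice[OF isCont_arc_slope[of "(c, x)" k]] ap by simp
  ultimately show "isCont (arc_path_deriv k m c P1 P2) x"
    unfolding arc_path_deriv_def[abs_def]
    by (intro continuous_intros isCont_o2[OF path]) auto
  show "isCont (\<lambda>x. vgrad P1 P2 (arc_path k m c x)) x"
    by (rule isCont_o2[OF path isCont_vgrad[OF g arc_path_in_open_cell[OF a]]])
qed

section \<open>Coarea bound\<close>

definition arc_region :: "real \<Rightarrow> real \<Rightarrow> real \<Rightarrow> (real \<times> real) set" where
  "arc_region k m d =
     {p. d \<le> fst p \<and> fst p \<le> 3/2 * d \<and> k + arc_end (fst p) \<le> snd p \<and> snd p \<le> k + 1 - arc_end (fst p)}"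

definition arc_integrand :: "real \<Rightarrow> real \<Rightarrow> scalar_field \<Rightarrow> scalar_field \<Rightarrow> scalar_field" where
  "arc_integrand k m P1 P2 p = (vgrad P1 P2 (arc_path k m (fst p) (snd p)))\<^sup>2 / arc_speed (fst p) (snd p - k)"

lemma arc_region_D:
  assumes "p \<in> arc_region k m d" "0 < d" "d < 1 / (2 * pi)"
  shows "0 < fst p" "pi * fst p < 3/4" "arc_end (fst p) \<le> snd p - k" "snd p - k \<le> 1 - arc_end (fst p)"
  using level_range_bounds[OF assms(2,3), of "fst p"] assms(1) unfolding arc_region_def by auto

lemma continuous_on_arc_integrand:
  assumes g: "cont_grad_on (open_cell k m) f P1 P2" and d: "0 < d" "d < 1 / (2 * pi)"
  shows "continuous_on (arc_region k m d) (arc_integrand k m P1 P2)"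
proof (rule continuous_at_imp_continuous_on, rule ballI)
  fix p assume p: "p \<in> arc_region k m d"
  note a = arc_region_D[OF p d]
  note af = arc_facts[OF a]
  have c1: "isCont (\<lambda>p::real\<times>real. arc_path k m (fst p) (snd p)) p" by (rule isCont_arc_path[OF a])
  have c2: "isCont (vgrad P1 P2) (arc_path k m (fst p) (snd p))"
    by (rule isCont_vgrad[OF g]) (rule arc_path_in_open_cell[OF a])
  have "isCont (\<lambda>p. vgrad P1 P2 (arc_path k m (fst p) (snd p))) p" by (rule isCont_o2[OF c1 c2])
  moreover have "arc_speed (fst p) (snd p - k) \<noteq> 0" using af by linarith
  ultimately show "isCont (arc_integrand k m P1 P2) p" unfolding arc_integrand_def[abs_def]
    by (intro continuous_intros isCont_arc_speed) auto
qed

lemma continuous_on_arc_end: "continuous_on UNIV arc_end"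
  unfolding arc_end_def by (intro continuous_intros) auto

lemma closed_arc_region: "closed (arc_region k m d)"
proof -
  have e: "arc_region k m d = {p. d \<le> fst p} \<inter> {p. fst p \<le> 3/2 * d}
      \<inter> {p. k + arc_end (fst p) \<le> snd p} \<inter> {p. snd p \<le> k + 1 - arc_end (fst p)}"
    unfolding arc_region_def by auto
  have cb: "continuous_on UNIV (\<lambda>p::real\<times>real. arc_end (fst p))"
    by (rule continuous_on_compose2[OF continuous_on_arc_end]) (auto intro: continuous_intros)
  show ?thesis unfolding e
    by (intro closed_Int closed_Collect_le continuous_intros cb)
qed

definition arc_density ::
  "real \<Rightarrow> real \<Rightarrow> real \<Rightarrow> scalar_field \<Rightarrow> scalar_field \<Rightarrow> scalar_field" where
  "arc_density k m d P1 P2 p = indicator (arc_region k m d) p * arc_integrand k m P1 P2 p"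

lemma arc_density_measurable:
  assumes "cont_grad_on (open_cell k m) f P1 P2" "0 < d" "d < 1 / (2 * pi)"
  shows "arc_density k m d P1 P2 \<in> borel_measurable borel"
proof -
  have "(\<lambda>p. indicator (arc_region k m d) p *\<^sub>R arc_integrand k m P1 P2 p) \<in> borel_measurable borel"
    by (rule borel_measurable_continuous_on_indicator[OF borel_closed[OF closed_arc_region]
        continuous_on_arc_integrand[OF assms]])
  then show ?thesis unfolding arc_density_def[abs_def] by simp
qed

text \<open>Coarea along the vertical line through \<open>x\<close>: the substitution
  \<open>c = sin (\<pi>(x - k)) sin (\<pi>(y - m)) / \<pi>\<close>, \<open>y \<in> [m, m + 1/2]\<close>, has \<open>dc = arc_speed c (x - k) dy\<close>
  and traces the arcs through the points \<open>(x, y)\<close>.\<close>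

lemma arc_density_slice_le:
  fixes k m :: real
  assumes g: "cont_grad_on (open_cell k m) f P1 P2" and d: "0 < d" "d < 1 / (2 * pi)"
  shows "(\<integral>\<^sup>+c. ennreal (arc_density k m d P1 P2 (c, x)) \<partial>lborel)
     \<le> (\<integral>\<^sup>+y. ennreal (indicator (open_cell k m) (x, y) * (vgrad P1 P2 (x, y))\<^sup>2) \<partial>lborel)"
proof (cases "0 < sin (pi * (x - k))")
  case False
  have "(c, x) \<notin> arc_region k m d" for c
  proof
    assume "(c, x) \<in> arc_region k m d"
    from arc_facts[OF arc_region_D[OF this d]] False show False by simp
  qed
  then show ?thesis by (simp add: arc_density_def)
next
  case True
  define ss where "ss = sin (pi * (x - k))"
  have ss: "0 < ss" using True unfolding ss_def .
  define g where "g y = ss * sin (pi * (y - m)) / pi" for y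
  define g' where "g' y = ss * cos (pi * (y - m))" for y
  have region: "0 < c" "pi * c < 3/4" "arc_end c \<le> x - k" "x - k \<le> 1 - arc_end c"
    if "(c, x) \<in> arc_region k m d" for c
    using arc_region_D[OF that d] by auto
  have support: "c \<in> {g m .. g (m + 1/2)}" if "arc_density k m d P1 P2 (c, x) \<noteq> 0" for c
  proof -
    have R: "(c, x) \<in> arc_region k m d"
      using that unfolding arc_density_def by (auto simp: indicator_def split: if_splits)
    have "(sqrt (pi * c))\<^sup>2 \<le> ss\<^sup>2"
      using sqrt_le_sin_on_arc[OF region(1-4)[OF R]] region[OF R] unfolding ss_def
      by (intro power_mono) auto
    also have "\<dots> \<le> ss" using sin_le_one[of "pi * (x - k)"] ss
      unfolding ss_def by (simp add: power2_eq_square mult_le_cancel_left1)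
    finally show ?thesis using region[OF R] by (simp add: g_def field_simps)
  qed
  have level: "arc_path k m (g y) x = (x, y)" "arc_speed (g y) (x - k) = g' y" if "y \<in> {m..m + 1/2}" for y
    using arc_eqI[of "y - m" "x - k" "g y"] arc_speed_of_level[of "y - m" "x - k"] that ss
    unfolding arc_path_def g_def g'_def ss_def by auto
  have "(\<integral>\<^sup>+c. ennreal (arc_density k m d P1 P2 (c, x)) \<partial>lborel)
      = (\<integral>\<^sup>+c. ennreal (arc_density k m d P1 P2 (c, x)) * indicator {g m .. g (m + 1/2)} c \<partial>lborel)"
    using support by (intro nn_integral_cong) (force simp: indicator_def)
  also have "\<dots> = (\<integral>\<^sup>+y. ennreal (arc_density k m d P1 P2 (g y, x)) * ennreal (g' y)
      * indicator {m .. m + 1/2} y \<partial>lborel)"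
  proof (rule nn_integral_substitution_aux)
    show "(\<lambda>c. ennreal (arc_density k m d P1 P2 (c, x))) \<in> borel_measurable borel"
      using arc_density_measurable[OF g d] by measurable
    show "(g has_real_derivative g' y) (at y)" for y
      unfolding g_def[abs_def] g'_def by (auto intro!: derivative_eq_intros)
    show "continuous_on {m..m + 1/2} g'" unfolding g'_def[abs_def] by (intro continuous_intros)
    show "0 \<le> g' y" if "y \<in> {m..m + 1/2}" for y
    proof -
      have "0 \<le> pi * (y - m)" "pi * (y - m) \<le> pi / 2"
        using pi_times_half_range[of "y - m"] that by auto
      then have "0 \<le> cos (pi * (y - m))" using pi_gt_zero by (intro cos_ge_zero) linarith+
      then show ?thesis using ss unfolding g'_def by simp
    qed
  qed auto
  also have "\<dots> \<le> (\<integral>\<^sup>+y. ennreal (indicator (open_cell k m) (x, y) * (vgrad P1 P2 (x, y))\<^sup>2) \<partial>lborel)"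
  proof (rule nn_integral_mono)
    fix y
    show "ennreal (arc_density k m d P1 P2 (g y, x)) * ennreal (g' y) * indicator {m .. m + 1/2} y
        \<le> ennreal (indicator (open_cell k m) (x, y) * (vgrad P1 P2 (x, y))\<^sup>2)"
    proof (cases "y \<in> {m .. m + 1/2} \<and> (g y, x) \<in> arc_region k m d")
      case True
      then have y: "y \<in> {m .. m + 1/2}" and R: "(g y, x) \<in> arc_region k m d" by auto
      note lv = level[OF y]
      have "(x, y) \<in> open_cell k m"
        using arc_path_in_open_cell[OF region(1-4)[OF R], of m] lv by simp
      moreover have "0 < g' y" using arc_facts[OF region(1-4)[OF R]] lv by simp
      ultimately show ?thesis
        using R lv y unfolding arc_density_def arc_integrand_def
        by (simp add: ennreal_mult''[symmetric])
    qed (auto simp: arc_density_def indicator_def)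
  qed
  finally show ?thesis .
qed

definition arc_energy ::
  "real \<Rightarrow> real \<Rightarrow> real \<Rightarrow> scalar_field \<Rightarrow> scalar_field \<Rightarrow> real \<Rightarrow> ennreal" where
  "arc_energy k m d P1 P2 c = (\<integral>\<^sup>+x. ennreal (arc_density k m d P1 P2 (c, x)) \<partial>lborel)"

definition cell_energy :: "real \<Rightarrow> real \<Rightarrow> scalar_field \<Rightarrow> ennreal" where
  "cell_energy k m W =
     (\<integral>\<^sup>+x. \<integral>\<^sup>+y. ennreal (indicator (open_cell k m) (x, y) * (W (x, y))\<^sup>2) \<partial>lborel \<partial>lborel)"

lemma arc_energy_measurable:
  assumes "cont_grad_on (open_cell k m) f P1 P2" "0 < d" "d < 1 / (2 * pi)"
  shows "arc_energy k m d P1 P2 \<in> borel_measurable lborel"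
proof -
  note [measurable] = arc_density_measurable[OF assms]
  show ?thesis unfolding arc_energy_def[abs_def]
    by (rule lborel.borel_measurable_nn_integral_fst) (simp add: lborel_prod)
qed

lemma nn_integral_arc_energy_le:
  assumes g: "cont_grad_on (open_cell k m) f P1 P2" and d: "0 < d" "d < 1 / (2 * pi)"
  shows "(\<integral>\<^sup>+c. arc_energy k m d P1 P2 c \<partial>lborel) \<le> cell_energy k m (vgrad P1 P2)"
proof -
  note [measurable] = arc_density_measurable[OF g d]
  have "(\<integral>\<^sup>+c. arc_energy k m d P1 P2 c \<partial>lborel)
      = (\<integral>\<^sup>+x. \<integral>\<^sup>+c. ennreal (arc_density k m d P1 P2 (c, x)) \<partial>lborel \<partial>lborel)"
    unfolding arc_energy_def
  proof (rule lborel_pair.Fubini'[symmetric])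
    have M: "(\<lambda>p. ennreal (arc_density k m d P1 P2 p)) \<in> borel_measurable (lborel \<Otimes>\<^sub>M lborel)"
      by (simp add: lborel_prod)
    have eq: "(\<lambda>(x, y). ennreal (arc_density k m d P1 P2 (x, y))) = (\<lambda>p. ennreal (arc_density k m d P1 P2 p))"
      by (auto simp: fun_eq_iff)
    show "(\<lambda>(x, y). ennreal (arc_density k m d P1 P2 (x, y))) \<in> borel_measurable (lborel \<Otimes>\<^sub>M lborel)"
      unfolding eq by (rule M)
  qed
  also have "\<dots> \<le> cell_energy k m (vgrad P1 P2)"
    unfolding cell_energy_def by (intro nn_integral_mono arc_density_slice_le[OF g d])
  finally show ?thesis .
qed

lemma arc_energy_eq:
  assumes c: "d \<le> c" "c \<le> 3/2 * d"
  shows "arc_energy k m d P1 P2 c = (\<integral>\<^sup>+x. indicator {k + arc_end c .. k + 1 - arc_end c} x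
    * ennreal ((vgrad P1 P2 (arc_path k m c x))\<^sup>2 / arc_speed c (x - k)) \<partial>lborel)"
  unfolding arc_energy_def arc_density_def arc_integrand_def arc_region_def
  using c by (intro nn_integral_cong) (auto simp: indicator_def)

lemma cell_integrand_measurable:
  assumes g: "cont_grad_on (open_cell k m) f P1 P2"
  shows "(\<lambda>p. indicator (open_cell k m) p * (vgrad P1 P2 p)\<^sup>2) \<in> borel_measurable borel"
proof -
  have "continuous_on (open_cell k m) (\<lambda>p. (vgrad P1 P2 p)\<^sup>2)"
    using isCont_vgrad[OF g] by (intro continuous_at_imp_continuous_on ballI continuous_intros) auto
  then have "(\<lambda>p. indicator (open_cell k m) p *\<^sub>R (vgrad P1 P2 p)\<^sup>2) \<in> borel_measurable borel"
    by (intro borel_measurable_continuous_on_indicator borel_open open_open_cell)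
  then show ?thesis by simp
qed

lemma cell_energy_le:
  assumes g: "cont_grad_on (open_cell k m) f P1 P2" and sub: "open_cell k m \<subseteq> Q"
  shows "cell_energy k m (vgrad P1 P2) \<le> (\<integral>\<^sup>+x\<in>Q. ennreal ((vgrad P1 P2 x)\<^sup>2) \<partial>lborel)"
proof -
  define G where "G p = indicator (open_cell k m) p * (vgrad P1 P2 p)\<^sup>2" for p
  have [measurable]: "G \<in> borel_measurable borel" unfolding G_def[abs_def] by (rule cell_integrand_measurable[OF g])
  have M: "(\<lambda>p. ennreal (G p)) \<in> borel_measurable (lborel \<Otimes>\<^sub>M lborel)" by (simp add: lborel_prod)
  have "cell_energy k m (vgrad P1 P2) = (\<integral>\<^sup>+x. \<integral>\<^sup>+y. ennreal (G (x, y)) \<partial>lborel \<partial>lborel)"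
    unfolding cell_energy_def G_def ..
  also have "\<dots> = integral\<^sup>N (lborel \<Otimes>\<^sub>M lborel) (\<lambda>p. ennreal (G p))"
    by (rule lborel.nn_integral_fst[OF M])
  also have "\<dots> = (\<integral>\<^sup>+p. ennreal (G p) \<partial>lborel)" by (simp add: lborel_prod)
  also have "\<dots> \<le> (\<integral>\<^sup>+x\<in>Q. ennreal ((vgrad P1 P2 x)\<^sup>2) \<partial>lborel)"
    unfolding G_def using sub by (intro nn_integral_mono) (auto simp: indicator_def)
  finally show ?thesis .
qed

section \<open>Oscillation along one arc\<close>

lemma inverse_sin_has_integral:
  assumes c: "0 < c" "pi * c < 3/4"
  shows "((\<lambda>x. 1 / sin (pi * (x - k))) has_integral (- (2 / pi) * ln (tan (pi * arc_end c / 2))))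
           {k + arc_end c .. k + 1 - arc_end c}"
proof -
  note cf = arc_end_facts[OF c]
  define F where "F x = ln (tan (pi * (x - k) / 2)) / pi" for x
  have deriv: "(F has_vector_derivative 1 / sin (pi * (x - k))) (at x within {k + arc_end c .. k + 1 - arc_end c})"
    if x: "x \<in> {k + arc_end c .. k + 1 - arc_end c}" for x
  proof -
    define y where "y = pi * (x - k) / 2"
    have y0: "0 < y" unfolding y_def using x cf by auto
    have "x - k < 1" using x cf by auto
    then have "pi * (x - k) < pi * 1" by (intro mult_strict_left_mono) auto
    then have y1: "y < pi / 2" unfolding y_def by simp
    have cy: "0 < cos y" using y0 y1 by (intro cos_gt_zero) auto
    have sy: "0 < sin y" using y0 y1 by (intro sin_gt_zero) auto
    have ty: "0 < tan y" using cy sy by (simp add: tan_def)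
    have "((\<lambda>x. ln (tan (pi * (x - k) / 2)) / pi) has_real_derivative
          inverse (tan y) * (inverse ((cos y)\<^sup>2) * (pi / 2)) / pi) (at x)"
      using cy ty unfolding y_def
      by (auto intro!: derivative_eq_intros DERIV_tan simp: power2_eq_square field_simps)
    moreover have "inverse (tan y) * (inverse ((cos y)\<^sup>2) * (pi / 2)) / pi = 1 / sin (pi * (x - k))"
    proof -
      have "sin (pi * (x - k)) = 2 * sin y * cos y" unfolding y_def using sin_double[of "pi * (x - k) / 2"] by simp
      then show ?thesis using cy sy by (simp add: tan_def field_simps power2_eq_square)
    qed
    ultimately have "(F has_real_derivative 1 / sin (pi * (x - k))) (at x)" unfolding F_def[abs_def] by simp
    then show ?thesis using has_real_derivative_iff_has_vector_derivative has_vector_derivative_at_within by blast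
  qed
  have "((\<lambda>x. 1 / sin (pi * (x - k))) has_integral (F (k + 1 - arc_end c) - F (k + arc_end c))) {k + arc_end c .. k + 1 - arc_end c}"
    by (rule fundamental_theorem_of_calculus) (use cf deriv in auto)
  moreover have "F (k + 1 - arc_end c) - F (k + arc_end c) = - (2 / pi) * ln (tan (pi * arc_end c / 2))"
  proof -
    have "pi * (k + 1 - arc_end c - k) / 2 = pi / 2 - pi * arc_end c / 2" by (simp add: field_simps)
    then have "tan (pi * (k + 1 - arc_end c - k) / 2) = tan (pi / 2 - pi * arc_end c / 2)" by (rule arg_cong)
    also have "\<dots> = inverse (tan (pi * arc_end c / 2))" by (rule tan_cot)
    finally have "tan (pi * (k + 1 - arc_end c - k) / 2) = inverse (tan (pi * arc_end c / 2))" .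
    then have "F (k + 1 - arc_end c) = - ln (tan (pi * arc_end c / 2)) / pi" unfolding F_def by (simp add: ln_inverse)
    moreover have "F (k + arc_end c) = ln (tan (pi * arc_end c / 2)) / pi" unfolding F_def by simp
    ultimately show ?thesis by (simp add: field_simps)
  qed
  ultimately show ?thesis by simp
qed

lemma sqrt_le_tan_arc_end:
  assumes c: "0 < c" "pi * c < 3/4"
  shows "sqrt (pi * c) / 2 \<le> tan (pi * arc_end c / 2)"
proof -
  note cf = arc_end_facts[OF c]
  define y where "y = pi * arc_end c / 2"
  have y0: "0 < y" unfolding y_def using cf by auto
  have "pi * arc_end c < pi * (1/2)" using cf by (intro mult_strict_left_mono) auto
  then have y1: "y < pi / 2" unfolding y_def by simp
  have cy: "0 < cos y" using y0 y1 by (intro cos_gt_zero) auto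
  have sy: "0 < sin y" using y0 y1 by (intro sin_gt_zero) auto
  have "sqrt (pi * c) = 2 * sin y * cos y" using cf(3) sin_double[of y] unfolding y_def by simp
  moreover have "sin y * cos y \<le> sin y / cos y"
  proof -
    have "cos y * cos y \<le> 1" using cos_le_one[of y] cy by (metis mult_le_one less_eq_real_def)
    then have "sin y * (cos y * cos y) \<le> sin y" using sy by (simp add: mult_left_le)
    then show ?thesis using cy by (simp add: field_simps)
  qed
  ultimately show ?thesis unfolding y_def[symmetric] by (simp add: tan_def)
qed

lemma inverse_sin_integral_le_ln:
  assumes d: "0 < d" "d < 1 / (2 * pi)" and c: "d \<le> c" "c \<le> 3/2 * d"
  shows "- (2 / pi) * ln (tan (pi * arc_end c / 2)) \<le> ln (1 / d)"
proof -
  have t1: "sqrt (pi * c) / 2 \<le> tan (pi * arc_end c / 2)"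
    by (rule sqrt_le_tan_arc_end[OF level_range_bounds[OF d c]])
  have "2 * pi * d < 1" using d(2) by (simp add: field_simps)
  have "sqrt (pi * d) \<le> sqrt (pi * c)" using c by simp
  moreover have "2 * d \<le> sqrt (pi * d)"
  proof -
    have "(2 * d)\<^sup>2 \<le> pi * d"
    proof -
      have "2 * 2 * d \<le> 2 * pi * d" using d pi_ge_two by (intro mult_right_mono) auto
      then have "4 * d \<le> pi" using \<open>2 * pi * d < 1\<close> pi_ge_two by linarith
      then have "4 * d * d \<le> pi * d" using d by (intro mult_right_mono) auto
      then show ?thesis by (simp add: power2_eq_square)
    qed
    then show ?thesis using d by (metis real_le_rsqrt)
  qed
  ultimately have td: "d \<le> tan (pi * arc_end c / 2)" using t1 by linarith
  then have "ln d \<le> ln (tan (pi * arc_end c / 2))" using d by simp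
  then have "- ln (tan (pi * arc_end c / 2)) \<le> ln (1 / d)" using d by (simp add: ln_div)
  moreover have "0 \<le> ln (1 / d)" using ln_inverse_pos[OF d] by simp
  moreover have "2 / pi \<le> 1" using pi_ge_two by simp
  ultimately have "(2 / pi) * (- ln (tan (pi * arc_end c / 2))) \<le> 1 * ln (1 / d)"
  proof (cases "0 \<le> - ln (tan (pi * arc_end c / 2))")
    case True
    then show ?thesis using \<open>2 / pi \<le> 1\<close> \<open>- ln (tan (pi * arc_end c / 2)) \<le> ln (1 / d)\<close>
      by (intro mult_mono) auto
  next
    case False
    then have "(2 / pi) * (- ln (tan (pi * arc_end c / 2))) \<le> 0"
      by (intro mult_nonneg_nonpos) auto
    then show ?thesis using \<open>0 \<le> ln (1 / d)\<close> by linarith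
  qed
  then show ?thesis by simp
qed

lemma nn_integral_inverse_arc_speed_le:
  assumes d: "0 < d" "d < 1 / (2 * pi)" and c: "d \<le> c" "c \<le> 3/2 * d"
  shows "(\<integral>\<^sup>+x. indicator {k + arc_end c .. k + 1 - arc_end c} x * ennreal (1 / arc_speed c (x - k)) \<partial>lborel)
    \<le> ennreal (2 * ln (1 / d))"
proof -
  define S where "S = {k + arc_end c .. k + 1 - arc_end c}"
  note cb = level_range_bounds[OF d c]
  have af: "0 < sin (pi * (x - k))" "sin (pi * (x - k)) / 2 \<le> arc_speed c (x - k)" if "x \<in> S" for x
    using arc_facts[OF cb, of "x - k"] that unfolding S_def by auto
  have "1 / arc_speed c (x - k) \<le> 2 / sin (pi * (x - k))" if "x \<in> S" for x
    using af[OF that] by (simp add: field_simps)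
  then have "(\<integral>\<^sup>+x. indicator S x * ennreal (1 / arc_speed c (x - k)) \<partial>lborel)
      \<le> (\<integral>\<^sup>+x. ennreal (2 / sin (pi * (x - k))) * indicator S x \<partial>lborel)"
    by (intro nn_integral_mono) (auto simp: indicator_def intro!: ennreal_leI)
  also have "\<dots> = ennreal (2 * (- (2 / pi) * ln (tan (pi * arc_end c / 2))))"
  proof (rule nn_integral_has_integral_lebesgue')
    show "((\<lambda>x. 2 / sin (pi * (x - k))) has_integral 2 * (- (2 / pi) * ln (tan (pi * arc_end c / 2)))) S"
      using has_integral_mult_right[OF inverse_sin_has_integral[OF cb, of k], of 2] unfolding S_def by simp
  qed (use af in \<open>auto simp: less_imp_le\<close>)
  also have "\<dots> \<le> ennreal (2 * ln (1 / d))"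
    using inverse_sin_integral_le_ln[OF d c] by (intro ennreal_leI) simp
  finally show ?thesis unfolding S_def .
qed

lemma arc_oscillation:
  fixes k m :: int
  assumes g: "cont_grad_on (open_cell k m) f P1 P2" and d: "0 < d" "d < 1 / (2 * pi)"
    and c: "d \<le> c" "c \<le> 3/2 * d"
    and x: "x1 \<in> {real_of_int k + arc_end c .. real_of_int k + 1 - arc_end c}"
      "x2 \<in> {real_of_int k + arc_end c .. real_of_int k + 1 - arc_end c}"
  shows "ennreal ((f (arc_path k m c x1) - f (arc_path k m c x2))\<^sup>2)
    \<le> ennreal (2 * ln (1 / d)) * arc_energy k m d P1 P2 c"
proof -
  define S where "S = {real_of_int k + arc_end c .. real_of_int k + 1 - arc_end c}"
  define Df where "Df = arc_path_deriv k m c P1 P2"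
  define u where "u x = 1 / sqrt (arc_speed c (x - k))" for x :: real
  define w where "w x = \<bar>vgrad P1 P2 (arc_path k m c x)\<bar> / sqrt (arc_speed c (x - k))" for x :: real
  note cb = level_range_bounds[OF d c]
  have a: "0 < c" "pi * c < 3/4" "arc_end c \<le> x - k" "x - k \<le> 1 - arc_end c" if "x \<in> S" for x
    using cb that unfolding S_def by auto
  have speed: "0 < arc_speed c (x - k)" if "x \<in> S" for x
    using arc_facts[OF a[OF that]] by blast
  have "\<bar>Df x\<bar> = u x * w x" if "x \<in> S" for x
  proof -
    have "\<bar>vgrad P1 P2 (arc_path k m c x)\<bar> = arc_speed c (x - k) * \<bar>Df x\<bar>"
      using vgrad_arc_path[OF a[OF that]] speed[OF that]
      by (simp add: Df_def abs_mult abs_cos_pi_int)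
    then show ?thesis
      using speed[OF that] by (simp add: u_def w_def field_simps flip: real_sqrt_mult)
  qed
  then have int_eq: "integral S (\<lambda>x. \<bar>Df x\<bar>) = integral S (\<lambda>x. u x * w x)"
    by (intro integral_cong) auto
  have "isCont (\<lambda>x. arc_speed c (x - k)) x" for x :: real
    using isCont_slice[OF isCont_arc_speed[of "(c, x)" k]] by simp
  then have cont: "continuous_on S u" "continuous_on S w"
    using speed isCont_along_arc(2)[OF g a] unfolding u_def[abs_def] w_def[abs_def]
    by (auto intro!: continuous_intros continuous_at_imp_continuous_on simp: less_imp_neq[symmetric])
  have "\<bar>f (arc_path k m c x1) - f (arc_path k m c x2)\<bar> \<le> integral S (\<lambda>x. \<bar>Df x\<bar>)"
    unfolding S_def
  proof (rule abs_diff_le_integral_abs_deriv[where g="\<lambda>x. f (arc_path k m c x)"])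
    show "((\<lambda>x. f (arc_path k m c x)) has_real_derivative Df x) (at x)"
      if "x \<in> {real_of_int k + arc_end c .. real_of_int k + 1 - arc_end c}" for x
      unfolding Df_def by (rule arc_path_has_derivative[OF g a[OF that[folded S_def]]])
    show "continuous_on {real_of_int k + arc_end c .. real_of_int k + 1 - arc_end c} Df"
      unfolding Df_def S_def[symmetric]
      by (intro continuous_at_imp_continuous_on ballI isCont_along_arc(1)[OF g a])
  qed (use x in \<open>auto simp: S_def\<close>)
  then have "(f (arc_path k m c x1) - f (arc_path k m c x2))\<^sup>2 \<le> (integral S (\<lambda>x. u x * w x))\<^sup>2"
    and "0 \<le> integral S (\<lambda>x. u x * w x)"
    unfolding int_eq using abs_le_square_iff by fastforce+
  then have "ennreal ((f (arc_path k m c x1) - f (arc_path k m c x2))\<^sup>2)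
      \<le> (ennreal (integral S (\<lambda>x. u x * w x)))\<^sup>2"
    by (simp add: ennreal_power ennreal_leI)
  also have "\<dots> \<le> (\<integral>\<^sup>+x. indicator S x * ennreal ((u x)\<^sup>2) \<partial>lborel)
      * (\<integral>\<^sup>+x. indicator S x * ennreal ((w x)\<^sup>2) \<partial>lborel)"
    using cont speed unfolding S_def
    by (intro integral_Cauchy_Schwarz_ennreal) (auto simp: u_def w_def less_imp_le)
  also have "\<dots> \<le> ennreal (2 * ln (1 / d)) * arc_energy k m d P1 P2 c"
  proof (intro mult_mono)
    have "(\<integral>\<^sup>+x. indicator S x * ennreal ((u x)\<^sup>2) \<partial>lborel)
        = (\<integral>\<^sup>+x. indicator S x * ennreal (1 / arc_speed c (x - k)) \<partial>lborel)"
      using speed by (intro nn_integral_cong) (auto simp: indicator_def u_def power_divide less_imp_le)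
    then show "(\<integral>\<^sup>+x. indicator S x * ennreal ((u x)\<^sup>2) \<partial>lborel) \<le> ennreal (2 * ln (1 / d))"
      using nn_integral_inverse_arc_speed_le[OF d c] unfolding S_def by simp
    have "(\<integral>\<^sup>+x. indicator S x * ennreal ((w x)\<^sup>2) \<partial>lborel) = arc_energy k m d P1 P2 c"
      unfolding arc_energy_eq[OF c] S_def
      using speed[unfolded S_def]
      by (intro nn_integral_cong) (auto simp: indicator_def w_def power_divide less_imp_le)
    then show "(\<integral>\<^sup>+x. indicator S x * ennreal ((w x)\<^sup>2) \<partial>lborel) \<le> arc_energy k m d P1 P2 c"
      by simp
  qed auto
  finally show ?thesis .
qed

section \<open>Symmetries of a cell\<close>

lemma cont_grad_on_compose_linear:
  assumes g: "cont_grad_on T f P1 P2" and S: "open S" "\<phi> ` S \<subseteq> T"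
    and \<phi>: "\<And>p. (\<phi> has_derivative (\<lambda>h. (a * fst h + b * snd h, c * fst h + e * snd h))) (at p)"
  shows "cont_grad_on S (\<lambda>p. f (\<phi> p))
    (\<lambda>p. a * P1 (\<phi> p) + c * P2 (\<phi> p)) (\<lambda>p. b * P1 (\<phi> p) + e * P2 (\<phi> p))"
  unfolding cont_grad_on_def
proof (intro conjI ballI)
  fix p assume "p \<in> S"
  then have "(f has_derivative (\<lambda>h. P1 (\<phi> p) * fst h + P2 (\<phi> p) * snd h)) (at (\<phi> p))"
    using g S unfolding cont_grad_on_def by blast
  from has_derivative_compose[OF \<phi> this]
  show "((\<lambda>p. f (\<phi> p)) has_derivative
      (\<lambda>h. (a * P1 (\<phi> p) + c * P2 (\<phi> p)) * fst h + (b * P1 (\<phi> p) + e * P2 (\<phi> p)) * snd h)) (at p)"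
    by (simp add: algebra_simps)
next
  have "continuous_on S \<phi>"
    using \<phi> by (intro continuous_at_imp_continuous_on ballI has_derivative_continuous) blast
  then have "continuous_on S (\<lambda>p. P1 (\<phi> p))" "continuous_on S (\<lambda>p. P2 (\<phi> p))"
    using g S unfolding cont_grad_on_def by (auto intro: continuous_on_compose2)
  then show "continuous_on S (\<lambda>p. a * P1 (\<phi> p) + c * P2 (\<phi> p))"
    "continuous_on S (\<lambda>p. b * P1 (\<phi> p) + e * P2 (\<phi> p))"
    by (auto intro!: continuous_intros)
qed

definition reflect :: "real \<Rightarrow> real \<times> real \<Rightarrow> real \<times> real" where
  "reflect m p = (fst p, 2 * m + 1 - snd p)"

lemma reflect_open_cell: "p \<in> open_cell k m \<longleftrightarrow> reflect m p \<in> open_cell k m"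
  unfolding reflect_def open_cell_def by (cases p) auto

lemma cont_grad_on_reflect:
  assumes "cont_grad_on (open_cell k m) f P1 P2"
  shows "cont_grad_on (open_cell k m) (\<lambda>p. f (reflect m p)) (\<lambda>p. P1 (reflect m p)) (\<lambda>p. - P2 (reflect m p))"
proof -
  have "(reflect m has_derivative (\<lambda>h. (1 * fst h + 0 * snd h, 0 * fst h + (-1) * snd h))) (at p)" for p
    unfolding reflect_def[abs_def] by (auto intro!: derivative_eq_intros)
  from cont_grad_on_compose_linear[OF assms open_open_cell _ this] reflect_open_cell
  show ?thesis by (simp add: image_subset_iff)
qed

lemma vgrad_reflect:
  fixes m :: int
  shows "vgrad (\<lambda>p. P1 (reflect m p)) (\<lambda>p. - P2 (reflect m p)) p = - vgrad P1 P2 (reflect m p)"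
proof -
  have e: "pi * (2 * real_of_int m + 1 - y) = pi * (2 * real_of_int m + 1) - pi * y" for y
    by (simp add: algebra_simps)
  have s: "sin (pi * (2 * real_of_int m + 1 - y)) = sin (pi * y)" for y
    unfolding e by (simp only: sin_diff cos_pi_odd sin_pi_odd)
  have c: "cos (pi * (2 * real_of_int m + 1 - y)) = - cos (pi * y)" for y
    unfolding e by (simp only: cos_diff cos_pi_odd sin_pi_odd)
  show ?thesis unfolding vgrad_def H_d1_def H_d2_def reflect_def by (simp add: s c)
qed

lemma swap_open_cell: "p \<in> open_cell m k \<longleftrightarrow> prod.swap p \<in> open_cell k m"
  unfolding prod.swap_def open_cell_def by (cases p) auto

lemma cont_grad_on_swap:
  assumes "cont_grad_on (open_cell k m) f P1 P2"
  shows "cont_grad_on (open_cell m k) (\<lambda>p. f (prod.swap p)) (\<lambda>p. P2 (prod.swap p)) (\<lambda>p. P1 (prod.swap p))"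
proof -
  have "(prod.swap has_derivative (\<lambda>h. (0 * fst h + 1 * snd h, 1 * fst h + 0 * snd h))) (at p)"
    for p :: "real \<times> real"
    unfolding prod.swap_def[abs_def] by (auto intro!: derivative_eq_intros)
  from cont_grad_on_compose_linear[OF assms open_open_cell _ this] swap_open_cell
  show ?thesis by (simp add: image_subset_iff)
qed

lemma vgrad_swap: "vgrad (\<lambda>p. P2 (prod.swap p)) (\<lambda>p. P1 (prod.swap p)) p = - vgrad P1 P2 (prod.swap p)"
  unfolding vgrad_def H_d1_def H_d2_def prod.swap_def by (simp add: algebra_simps)

lemma cell_energy_reflect:
  fixes m :: int
  assumes g: "cont_grad_on (open_cell k m) f P1 P2"
  shows "cell_energy k m (vgrad (\<lambda>p. P1 (reflect m p)) (\<lambda>p. - P2 (reflect m p)))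
    = cell_energy k m (vgrad P1 P2)"
proof -
  define G where "G p = indicator (open_cell k m) p * (vgrad P1 P2 p)\<^sup>2" for p
  have [measurable]: "G \<in> borel_measurable borel"
    unfolding G_def[abs_def] by (rule cell_integrand_measurable[OF g])
  have "indicator (open_cell k m) (x, y) * (vgrad (\<lambda>p. P1 (reflect m p)) (\<lambda>p. - P2 (reflect m p)) (x, y))\<^sup>2
      = G (x, (2 * m + 1) + (-1) * y)" for x y :: real
    using reflect_open_cell[of "(x, y)" k m] unfolding G_def vgrad_reflect
    by (simp add: indicator_def reflect_def)
  moreover have "(\<integral>\<^sup>+y. ennreal (G (x, (2 * m + 1) + (-1) * y)) \<partial>lborel) = (\<integral>\<^sup>+y. ennreal (G (x, y)) \<partial>lborel)"
    for x :: real
    using nn_integral_real_affine[of "\<lambda>y. ennreal (G (x, y))" "-1" "2 * m + 1"] by simp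
  ultimately show ?thesis unfolding cell_energy_def by (simp add: G_def)
qed

lemma cell_energy_swap:
  assumes g: "cont_grad_on (open_cell k m) f P1 P2"
  shows "cell_energy m k (vgrad (\<lambda>p. P2 (prod.swap p)) (\<lambda>p. P1 (prod.swap p)))
    = cell_energy k m (vgrad P1 P2)"
proof -
  define G where "G p = indicator (open_cell k m) p * (vgrad P1 P2 p)\<^sup>2" for p
  have [measurable]: "G \<in> borel_measurable borel"
    unfolding G_def[abs_def] by (rule cell_integrand_measurable[OF g])
  have "indicator (open_cell m k) (x, y) * (vgrad (\<lambda>p. P2 (prod.swap p)) (\<lambda>p. P1 (prod.swap p)) (x, y))\<^sup>2
      = G (y, x)" for x y :: real
    using swap_open_cell[of "(x, y)" m k] unfolding G_def vgrad_swap by (simp add: indicator_def)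
  then have "cell_energy m k (vgrad (\<lambda>p. P2 (prod.swap p)) (\<lambda>p. P1 (prod.swap p)))
      = (\<integral>\<^sup>+x. \<integral>\<^sup>+y. ennreal (G (y, x)) \<partial>lborel \<partial>lborel)"
    unfolding cell_energy_def by simp
  also have "\<dots> = (\<integral>\<^sup>+y. \<integral>\<^sup>+x. ennreal (G (y, x)) \<partial>lborel \<partial>lborel)"
  proof (rule lborel_pair.Fubini'[symmetric])
    have [measurable]: "G \<in> borel_measurable (lborel \<Otimes>\<^sub>M lborel)" by (simp add: lborel_prod)
    show "(\<lambda>(x, y). ennreal (G (y, x))) \<in> borel_measurable (lborel \<Otimes>\<^sub>M lborel)"
      by (simp add: case_prod_beta')
  qed
  also have "\<dots> = cell_energy k m (vgrad P1 P2)" unfolding cell_energy_def G_def ..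
  finally show ?thesis .
qed

section \<open>The level set\<close>

lemma level_set_on_arcs:
  fixes K M :: int and c :: real
  defines "SK \<equiv> {real_of_int K + arc_end c .. real_of_int K + 1 - arc_end c}"
    and "SM \<equiv> {real_of_int M + arc_end c .. real_of_int M + 1 - arc_end c}"
  assumes c: "0 < c" "pi * c < 3/4"
    and p: "p \<in> {real_of_int K..real_of_int K + 1} \<times> {real_of_int M..real_of_int M + 1}"
      "H p = cos (pi * K) * cos (pi * M) * c"
  obtains (arc) x where "x \<in> SK" "p = arc_path K M c x"
    | (arc_refl) x where "x \<in> SK" "p = reflect M (arc_path K M c x)"
    | (swap) y where "y \<in> SM" "p = prod.swap (arc_path M K c y)"
    | (swap_refl) y where "y \<in> SM" "p = prod.swap (reflect K (arc_path M K c y))"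
proof -
  define s where "s = fst p - K"
  define t where "t = snd p - M"
  have pe: "p = (real_of_int K + s, real_of_int M + t)" unfolding s_def t_def by simp
  have st: "0 \<le> s" "s \<le> 1" "0 \<le> t" "t \<le> 1"
    using p(1) unfolding s_def t_def by (auto simp: mem_Times_iff)
  have "sin (pi * s) * sin (pi * t) = pi * c"
    using p(2) H_cell_coords[of K s M t] abs_cos_pi_int[of K] abs_cos_pi_int[of M]
    unfolding pe[symmetric] by (auto simp: field_simps abs_if split: if_splits)
  from level_curve_cases[OF c st this] show ?thesis
    using that pe unfolding SK_def SM_def arc_path_def reflect_def by force
qed

text \<open>The arcs \<open>t = arc c s\<close> and its swapped image both pass through the corner
  \<open>(arc_end c, arc_end c)\<close>, and each of the other two arcs meets one of these, so every point of
  the level set is joined to the corner by at most two arcs.\<close>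

lemma level_point_near_corner:
  fixes K M :: int and c :: real and f :: scalar_field
  defines "SK \<equiv> {real_of_int K + arc_end c .. real_of_int K + 1 - arc_end c}"
    and "SM \<equiv> {real_of_int M + arc_end c .. real_of_int M + 1 - arc_end c}"
  assumes c: "0 < c" "pi * c < 3/4"
    and o0: "\<And>x x'. x \<in> SK \<Longrightarrow> x' \<in> SK \<Longrightarrow>
      \<bar>f (arc_path K M c x) - f (arc_path K M c x')\<bar> \<le> e0"
    and o1: "\<And>x x'. x \<in> SK \<Longrightarrow> x' \<in> SK \<Longrightarrow>
      \<bar>f (reflect M (arc_path K M c x)) - f (reflect M (arc_path K M c x'))\<bar> \<le> e1"
    and o2: "\<And>y y'. y \<in> SM \<Longrightarrow> y' \<in> SM \<Longrightarrow>
      \<bar>f (prod.swap (arc_path M K c y)) - f (prod.swap (arc_path M K c y'))\<bar> \<le> e2"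
    and o3: "\<And>y y'. y \<in> SM \<Longrightarrow> y' \<in> SM \<Longrightarrow>
      \<bar>f (prod.swap (reflect K (arc_path M K c y))) - f (prod.swap (reflect K (arc_path M K c y')))\<bar> \<le> e3"
    and e: "0 \<le> e0" "0 \<le> e1" "0 \<le> e2" "0 \<le> e3"
    and p: "p \<in> {real_of_int K..real_of_int K + 1} \<times> {real_of_int M..real_of_int M + 1}"
      "H p = cos (pi * K) * cos (pi * M) * c"
  shows "\<bar>f p - f (K + arc_end c, M + arc_end c)\<bar> \<le> e0 + e1 + e2 + e3"
proof -
  define b where "b = arc_end c"
  define p0 where "p0 = (real_of_int K + b, real_of_int M + b)"
  note cf = arc_end_facts[OF c]
  have bK: "real_of_int K + b \<in> SK" "real_of_int K + 1 - b \<in> SK"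
    and bM: "real_of_int M + b \<in> SM" "real_of_int M + 1 - b \<in> SM"
    unfolding SK_def SM_def b_def using cf by auto
  have arc_b: "arc c b = b" "arc c (1 - b) = b" using arc_arc_end[OF c] unfolding b_def by auto
  have corners:
    "arc_path K M c (real_of_int K + b) = p0"
    "prod.swap (arc_path M K c (real_of_int M + b)) = p0"
    "reflect M (arc_path K M c (real_of_int K + b)) = (real_of_int K + b, real_of_int M + 1 - b)"
    "prod.swap (arc_path M K c (real_of_int M + 1 - b)) = (real_of_int K + b, real_of_int M + 1 - b)"
    "prod.swap (reflect K (arc_path M K c (real_of_int M + b))) = (real_of_int K + 1 - b, real_of_int M + b)"
    "arc_path K M c (real_of_int K + 1 - b) = (real_of_int K + 1 - b, real_of_int M + b)"
    unfolding arc_path_def reflect_def p0_def using arc_b by (simp_all add: algebra_simps)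
  from c p show ?thesis
  proof (cases rule: level_set_on_arcs)
    case (arc x)
    then have "\<bar>f p - f p0\<bar> \<le> e0" using o0[OF arc(1)[folded SK_def] bK(1)] corners by simp
    then show ?thesis using e unfolding p0_def b_def by linarith
  next
    case (arc_refl x)
    then have "\<bar>f p - f (real_of_int K + b, real_of_int M + 1 - b)\<bar> \<le> e1"
      and "\<bar>f (real_of_int K + b, real_of_int M + 1 - b) - f p0\<bar> \<le> e2"
      using o1[OF arc_refl(1)[folded SK_def] bK(1)] o2[OF bM(2) bM(1)] corners by simp_all
    then show ?thesis using e unfolding p0_def b_def by linarith
  next
    case (swap y)
    then have "\<bar>f p - f p0\<bar> \<le> e2" using o2[OF swap(1)[folded SM_def] bM(1)] corners by simp
    then show ?thesis using e unfolding p0_def b_def by linarith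
  next
    case (swap_refl y)
    then have "\<bar>f p - f (real_of_int K + 1 - b, real_of_int M + b)\<bar> \<le> e3"
      and "\<bar>f (real_of_int K + 1 - b, real_of_int M + b) - f p0\<bar> \<le> e0"
      using o3[OF swap_refl(1)[folded SM_def] bM(1)] o0[OF bK(2) bK(1)] corners by simp_all
    then show ?thesis using e unfolding p0_def b_def by linarith
  qed
qed

definition level_energy ::
  "int \<Rightarrow> int \<Rightarrow> real \<Rightarrow> scalar_field \<Rightarrow> scalar_field \<Rightarrow> real \<Rightarrow> ennreal"
where
  "level_energy K M d P1 P2 c =
     arc_energy K M d P1 P2 c
   + arc_energy K M d (\<lambda>p. P1 (reflect M p)) (\<lambda>p. - P2 (reflect M p)) c
   + arc_energy M K d (\<lambda>p. P2 (prod.swap p)) (\<lambda>p. P1 (prod.swap p)) c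
   + arc_energy M K d (\<lambda>p. P2 (prod.swap (reflect K p))) (\<lambda>p. - P1 (prod.swap (reflect K p))) c"

lemma nn_integral_level_energy_le:
  fixes K M :: int
  assumes g: "cont_grad_on (open_cell K M) f P1 P2" and d: "0 < d" "d < 1 / (2 * pi)"
  shows "level_energy K M d P1 P2 \<in> borel_measurable lborel"
    and "(\<integral>\<^sup>+c. level_energy K M d P1 P2 c \<partial>lborel) \<le> 4 * cell_energy K M (vgrad P1 P2)"
proof -
  note g1 = cont_grad_on_reflect[OF g] and g2 = cont_grad_on_swap[OF g]
  note g3 = cont_grad_on_reflect[OF g2]
  note meas = arc_energy_measurable[OF g d] arc_energy_measurable[OF g1 d]
    arc_energy_measurable[OF g2 d] arc_energy_measurable[OF g3 d]
  show "level_energy K M d P1 P2 \<in> borel_measurable lborel"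
    unfolding level_energy_def[abs_def] using meas by measurable
  have "(\<integral>\<^sup>+c. level_energy K M d P1 P2 c \<partial>lborel)
      \<le> cell_energy K M (vgrad P1 P2) + cell_energy K M (vgrad (\<lambda>p. P1 (reflect M p)) (\<lambda>p. - P2 (reflect M p)))
        + cell_energy M K (vgrad (\<lambda>p. P2 (prod.swap p)) (\<lambda>p. P1 (prod.swap p)))
        + cell_energy M K (vgrad (\<lambda>p. P2 (prod.swap (reflect K p))) (\<lambda>p. - P1 (prod.swap (reflect K p))))"
    unfolding level_energy_def using meas
    by (simp add: nn_integral_add add_mono nn_integral_arc_energy_le[OF g d]
        nn_integral_arc_energy_le[OF g1 d] nn_integral_arc_energy_le[OF g2 d] nn_integral_arc_energy_le[OF g3 d])
  also have "\<dots> = 4 * cell_energy K M (vgrad P1 P2)"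
    using cell_energy_reflect[OF g] cell_energy_swap[OF g] cell_energy_reflect[OF g2]
    by (simp add: ennreal_add4)
  finally show "(\<integral>\<^sup>+c. level_energy K M d P1 P2 c \<partial>lborel) \<le> 4 * cell_energy K M (vgrad P1 P2)" .
qed

lemma level_set_oscillation:
  fixes K M :: int and f :: scalar_field
  defines "Q \<equiv> {real_of_int K..real_of_int K + 1} \<times> {real_of_int M..real_of_int M + 1}"
  assumes g: "cont_grad_on (open_cell K M) f P1 P2" and d: "0 < d" "d < 1 / (2 * pi)"
    and c: "d \<le> c" "c \<le> 3/2 * d"
    and x: "x1 \<in> Q" "H x1 = cos (pi * K) * cos (pi * M) * c"
      "x2 \<in> Q" "H x2 = cos (pi * K) * cos (pi * M) * c"
  shows "ennreal (\<bar>f x1 - f x2\<bar>^2) \<le> ennreal (32 * ln (1 / d)) * level_energy K M d P1 P2 c"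
proof -
  note g1 = cont_grad_on_reflect[OF g] and g2 = cont_grad_on_swap[OF g]
  note g3 = cont_grad_on_reflect[OF g2]
  note cb = level_range_bounds[OF d c]
  define T where "T = 2 * ln (1 / d)"
  have lnpos: "0 < ln (1 / d)" by (rule ln_inverse_pos[OF d])
  then have T0: "0 \<le> T" unfolding T_def by simp
  show ?thesis
  proof (cases "level_energy K M d P1 P2 c = top")
    case True
    then show ?thesis using lnpos by (simp add: ennreal_mult_top)
  next
    case False
    define r0 where "r0 = enn2real (arc_energy K M d P1 P2 c)"
    define r1 where "r1 = enn2real (arc_energy K M d (\<lambda>p. P1 (reflect M p)) (\<lambda>p. - P2 (reflect M p)) c)"
    define r2 where "r2 = enn2real (arc_energy M K d (\<lambda>p. P2 (prod.swap p)) (\<lambda>p. P1 (prod.swap p)) c)"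
    define r3 where "r3 = enn2real (arc_energy M K d (\<lambda>p. P2 (prod.swap (reflect K p)))
      (\<lambda>p. - P1 (prod.swap (reflect K p))) c)"
    have fin: "arc_energy K M d P1 P2 c \<noteq> top"
      "arc_energy K M d (\<lambda>p. P1 (reflect M p)) (\<lambda>p. - P2 (reflect M p)) c \<noteq> top"
      "arc_energy M K d (\<lambda>p. P2 (prod.swap p)) (\<lambda>p. P1 (prod.swap p)) c \<noteq> top"
      "arc_energy M K d (\<lambda>p. P2 (prod.swap (reflect K p))) (\<lambda>p. - P1 (prod.swap (reflect K p))) c \<noteq> top"
      using False unfolding level_energy_def by auto
    have r: "0 \<le> r0" "0 \<le> r1" "0 \<le> r2" "0 \<le> r3" unfolding r0_def r1_def r2_def r3_def by auto
    have energy: "level_energy K M d P1 P2 c = ennreal (r0 + r1 + r2 + r3)"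
      unfolding level_energy_def r0_def r1_def r2_def r3_def using fin
      by (simp add: ennreal_plus[symmetric] ennreal_enn2real_if)
    have osc: "\<bar>F (arc_path k m c x) - F (arc_path k m c x')\<bar> \<le> sqrt (T * enn2real (arc_energy k m d Q1 Q2 c))"
      if "cont_grad_on (open_cell k m) F Q1 Q2" "arc_energy k m d Q1 Q2 c \<noteq> top"
        "x \<in> {real_of_int k + arc_end c .. real_of_int k + 1 - arc_end c}"
        "x' \<in> {real_of_int k + arc_end c .. real_of_int k + 1 - arc_end c}"
      for k m :: int and F Q1 Q2 x x'
      using abs_le_sqrt_of_ennreal_le[OF arc_oscillation[OF that(1) d c that(3,4)] that(2)] T0
      unfolding T_def by simp
    have near: "\<bar>f p - f (K + arc_end c, M + arc_end c)\<bar>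
        \<le> sqrt (T * r0) + sqrt (T * r1) + sqrt (T * r2) + sqrt (T * r3)"
      if "p \<in> Q" "H p = cos (pi * K) * cos (pi * M) * c" for p
      using that unfolding Q_def r0_def r1_def r2_def r3_def
      by (intro level_point_near_corner[OF cb] osc[OF g fin(1)] osc[OF g1 fin(2)]
          osc[OF g2 fin(3)] osc[OF g3 fin(4)]) (use T0 in auto)
    have "\<bar>f x1 - f x2\<bar> \<le> 2 * (sqrt (T * r0) + sqrt (T * r1) + sqrt (T * r2) + sqrt (T * r3))"
      using near[OF x(1,2)] near[OF x(3,4)] by (smt (verit))
    then have "\<bar>f x1 - f x2\<bar>^2 \<le> (2 * (sqrt (T * r0) + sqrt (T * r1) + sqrt (T * r2) + sqrt (T * r3)))^2"
      by (intro power_mono) auto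
    also have "\<dots> = 4 * (sqrt (T * r0) + sqrt (T * r1) + sqrt (T * r2) + sqrt (T * r3))^2"
      by (simp only: power_mult_distrib) simp
    also have "\<dots> \<le> 16 * T * (r0 + r1 + r2 + r3)"
      using sum4_squared_le[of "sqrt (T * r0)" "sqrt (T * r1)" "sqrt (T * r2)" "sqrt (T * r3)"] T0 r
      by (simp add: algebra_simps)
    finally have "\<bar>f x1 - f x2\<bar>^2 \<le> 32 * ln (1 / d) * (r0 + r1 + r2 + r3)"
      unfolding T_def by simp
    then have "ennreal (\<bar>f x1 - f x2\<bar>^2) \<le> ennreal (32 * ln (1 / d) * (r0 + r1 + r2 + r3))"
      by (rule ennreal_leI)
    also have "\<dots> = ennreal (32 * ln (1 / d)) * ennreal (r0 + r1 + r2 + r3)"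
      using r lnpos by (intro ennreal_mult) auto
    finally show ?thesis unfolding energy .
  qed
qed

lemma exists_level_set_small_oscillation:
  fixes K M :: int and f :: scalar_field
  defines "Q \<equiv> {real_of_int K..real_of_int K + 1} \<times> {real_of_int M..real_of_int M + 1}"
  assumes g: "cont_grad_on (open_cell K M) f P1 P2" and d: "0 < \<delta>" "\<delta> < 1 / (2 * pi)"
  shows "\<exists>h. h \<noteq> 0 \<and> \<delta> < \<bar>h\<bar> \<and> \<bar>h\<bar> < 2 * \<delta> \<and> {x \<in> Q. H x = h} \<noteq> {} \<and>
     (\<forall>x1\<in>{x \<in> Q. H x = h}. \<forall>x2\<in>{x \<in> Q. H x = h}.
        ennreal (\<bar>f x1 - f x2\<bar>^2) \<le> ennreal (512 * (1 / \<delta>) * ln (1 / \<delta>)) * cell_energy K M (vgrad P1 P2))"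
proof -
  define I where "I = cell_energy K M (vgrad P1 P2)"
  obtain c where c: "\<delta> < c" "c < 3/2 * \<delta>"
    and energy: "level_energy K M \<delta> P1 P2 c \<le> ennreal (2 / (3/2 * \<delta> - \<delta>)) * (4 * I)"
    using nn_integral_small_value[OF nn_integral_level_energy_le(1)[OF g d] _
        nn_integral_level_energy_le(2)[OF g d], of \<delta> "3/2 * \<delta>"] d
    unfolding I_def by auto
  have cle: "\<delta> \<le> c" "c \<le> 3/2 * \<delta>" using c by auto
  note cb = level_range_bounds[OF d cle] and cf = arc_end_facts[OF level_range_bounds[OF d cle]]
  define h where "h = cos (pi * K) * cos (pi * M) * c"
  have habs: "\<bar>h\<bar> = c" unfolding h_def using cb by (simp add: abs_mult abs_cos_pi_int)
  have "H (K + arc_end c, M + arc_end c) = h"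
    using H_cell_coords[of K "arc_end c" M "arc_end c"] cf cb unfolding h_def by simp
  moreover have "(K + arc_end c, M + arc_end c) \<in> Q" unfolding Q_def using cf by auto
  moreover have "ennreal (\<bar>f x1 - f x2\<bar>^2) \<le> ennreal (512 * (1 / \<delta>) * ln (1 / \<delta>)) * I"
    if "x1 \<in> Q" "H x1 = h" "x2 \<in> Q" "H x2 = h" for x1 x2
  proof -
    have L0: "0 \<le> 32 * ln (1 / \<delta>)" using ln_inverse_pos[OF d] by simp
    have "ennreal (\<bar>f x1 - f x2\<bar>^2) \<le> ennreal (32 * ln (1 / \<delta>)) * level_energy K M \<delta> P1 P2 c"
      using level_set_oscillation[OF g d cle] that unfolding Q_def h_def by blast
    also have "\<dots> \<le> ennreal (32 * ln (1 / \<delta>)) * (ennreal (4 / \<delta>) * (4 * I))"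
      using energy d by (intro mult_left_mono) (simp_all add: field_simps)
    also have "\<dots> = ennreal (32 * ln (1 / \<delta>)) * ennreal (4 / \<delta>) * ennreal 4 * I"
      by (simp add: ac_simps)
    also have "ennreal (32 * ln (1 / \<delta>)) * ennreal (4 / \<delta>) * ennreal 4 = ennreal (512 * (1 / \<delta>) * ln (1 / \<delta>))"
      using L0 d by (simp add: ennreal_mult[symmetric] numeral_mult_ennreal field_simps)
    finally show ?thesis .
  qed
  ultimately show ?thesis
    using habs c d unfolding I_def by (intro exI[of _ h]) auto
qed

theorem lemma2p2:
  "\<exists>C::real. C > 0 \<and>
     (\<forall>(L::int) (A::real) (lam::real) (\<phi>::real \<times> real \<Rightarrow> real) Q (\<delta>\<^sub>0::real).
        L \<ge> 2 \<longrightarrow> even L \<longrightarrow> A > 0 \<longrightarrow>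
        principal_eigenfunction (real_of_int L) A lam \<phi> \<longrightarrow>
        is_cell (real_of_int L) Q \<longrightarrow>
        0 < \<delta>\<^sub>0 \<longrightarrow> \<delta>\<^sub>0 < 1 / (2 * pi) \<longrightarrow>
        (\<exists>h::real. h \<noteq> 0 \<and> \<delta>\<^sub>0 < \<bar>h\<bar> \<and> \<bar>h\<bar> < 2 * \<delta>\<^sub>0 \<and>
           {x \<in> Q. H x = h} \<noteq> {} \<and>
           (\<forall>x1\<in>{x \<in> Q. H x = h}. \<forall>x2\<in>{x \<in> Q. H x = h}.
              ennreal (\<bar>\<phi> x1 - \<phi> x2\<bar>^2)
                \<le> ennreal (C * (1 / \<delta>\<^sub>0) * ln (1 / \<delta>\<^sub>0))
                   * (\<integral>\<^sup>+ x\<in>Q. ennreal ((v x \<bullet> grad \<phi> x)^2) \<partial>lborel))))"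
proof (rule exI[of _ 512], intro conjI allI impI)
  fix L :: int and A lam \<delta> :: real and \<phi> :: "real \<times> real \<Rightarrow> real" and Q
  assume pe: "principal_eigenfunction (real_of_int L) A lam \<phi>" and cell: "is_cell (real_of_int L) Q"
    and d: "0 < \<delta>" "\<delta> < 1 / (2 * pi)"
  obtain K M :: int where Q: "Q = {real_of_int K..real_of_int K + 1} \<times> {real_of_int M..real_of_int M + 1}"
    and QD: "Q \<subseteq> D (real_of_int L)"
    using cell unfolding is_cell_def by blast
  have sub: "open_cell K M \<subseteq> Q" unfolding Q open_cell_def by auto
  then have "open_cell K M \<subseteq> interior (D (real_of_int L))"
    using QD open_open_cell by (intro interior_maximal) auto
  then have g: "cont_grad_on (open_cell K M) \<phi> (d1 \<phi>) (d2 \<phi>)"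
    using pe open_open_cell unfolding principal_eigenfunction_def C2_on_def
    by (blast intro: cont_grad_on_C1_on)
  have energy: "cell_energy K M (vgrad (d1 \<phi>) (d2 \<phi>))
      \<le> (\<integral>\<^sup>+ x\<in>Q. ennreal ((v x \<bullet> grad \<phi> x)^2) \<partial>lborel)"
    using cell_energy_le[OF g sub] by (simp add: inner_v_grad)
  show "\<exists>h. h \<noteq> 0 \<and> \<delta> < \<bar>h\<bar> \<and> \<bar>h\<bar> < 2 * \<delta> \<and> {x \<in> Q. H x = h} \<noteq> {} \<and>
      (\<forall>x1\<in>{x \<in> Q. H x = h}. \<forall>x2\<in>{x \<in> Q. H x = h}.
        ennreal (\<bar>\<phi> x1 - \<phi> x2\<bar>^2) \<le> ennreal (512 * (1 / \<delta>) * ln (1 / \<delta>))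
          * (\<integral>\<^sup>+ x\<in>Q. ennreal ((v x \<bullet> grad \<phi> x)^2) \<partial>lborel))"
    using exists_level_set_small_oscillation[OF g d] energy unfolding Q[symmetric]
    by (meson mult_left_mono order_trans zero_le)
qed (simp)

end
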